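(* Let $G=H(T,C)$ be a generalized Halin graph such that $\kappa_{LLY}(u,v)>0$ for every edge $\{u,v\}$ of $G$. Let $x$ be a vertex of $T$ of maximum degree $D(T)$, and let $A_1,\dots,A_c$ be the connected components of $T-\{x\}$, labeled in clockwise order around $x$ according to the planar embedding of $T$, with indices taken cyclically ($A_0=A_c$, $A_{c+1}=A_1$). If $|A_i\cap V(C)|\ge 2$ for some $i\in\{1,\dots,c\}$, then $|A_{i+1}\cap V(C)|=|A_{i-1}\cap V(C)|=1$.
   Context: All graphs are finite, simple, undirected and connected; $d(\cdot,\cdot)$ is the shortest-path distance and $d_v$ the degree of $v$. Lin-Lu-Yau curvature: for a vertex $v$ and $\alpha\in[0,1]$ let $m_v^\alpha(v)=\alpha$, $m_v^\alpha(u)=(1-\alpha)/d_v$ for neighbors $u$ of $v$, and $0$ elsewhere. For probability measures $m_1,m_2$, $W(m_1,m_2)=\inf_\pi\sum_{u,w}\pi(u,w)d(u,w)$ over couplings $\pi$ of $m_1,m_2$. For an edge $\{u,v\}$, $\kappa_\alpha(u,v)=1-W(m_u^\alpha,m_v^\alpha)$ and $\kappa_{LLY}(u,v)=\lim_{\alpha\to1}\kappa_\alpha(u,v)/(1-\alpha)$. A generalized Halin graph $H(T,C)$ is obtained from a tree $T$ with maximum degree $D(T)\ge3$ together with a planar embedding, by adding a cycle $C$ through all leaves of $T$ in the cyclic order in which they appear in the embedding. The vertices of $C$ are exactly the leaves of $T$. *)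

theory Defs
  imports Complex_Main
begin

definition walk_of_len :: "('a \<Rightarrow> 'a \<Rightarrow> bool) \<Rightarrow> nat \<Rightarrow> 'a \<Rightarrow> 'a \<Rightarrow> bool" where
  "walk_of_len E n u v \<longleftrightarrow>
     (\<exists>p::nat \<Rightarrow> 'a. p 0 = u \<and> p n = v \<and> (\<forall>i<n. E (p i) (p (Suc i))))"

definition gdist :: "('a \<Rightarrow> 'a \<Rightarrow> bool) \<Rightarrow> 'a \<Rightarrow> 'a \<Rightarrow> nat" where
  "gdist E u v = (LEAST n. walk_of_len E n u v)"

definition simple_graph :: "'a set \<Rightarrow> ('a \<Rightarrow> 'a \<Rightarrow> bool) \<Rightarrow> bool" where
  "simple_graph V E \<longleftrightarrow> finite V \<and>
     (\<forall>u v. E u v \<longrightarrow> u \<in> V \<and> v \<in> V \<and> u \<noteq> v \<and> E v u)"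

definition connected_graph :: "'a set \<Rightarrow> ('a \<Rightarrow> 'a \<Rightarrow> bool) \<Rightarrow> bool" where
  "connected_graph V E \<longleftrightarrow> V \<noteq> {} \<and> (\<forall>u\<in>V. \<forall>v\<in>V. \<exists>n. walk_of_len E n u v)"

definition acyclic_graph :: "('a \<Rightarrow> 'a \<Rightarrow> bool) \<Rightarrow> bool" where
  "acyclic_graph E \<longleftrightarrow>
     \<not> (\<exists>n (p::nat \<Rightarrow> 'a). 3 \<le> n \<and> inj_on p {..<n} \<and> (\<forall>i<n. E (p i) (p (Suc i mod n))))"

definition is_tree :: "'a set \<Rightarrow> ('a \<Rightarrow> 'a \<Rightarrow> bool) \<Rightarrow> bool" where
  "is_tree V E \<longleftrightarrow> simple_graph V E \<and> connected_graph V E \<and> acyclic_graph E"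

definition nbrs :: "('a \<Rightarrow> 'a \<Rightarrow> bool) \<Rightarrow> 'a \<Rightarrow> 'a set" where
  "nbrs E v = {w. E v w}"

definition deg :: "('a \<Rightarrow> 'a \<Rightarrow> bool) \<Rightarrow> 'a \<Rightarrow> nat" where
  "deg E v = card (nbrs E v)"

definition max_deg :: "'a set \<Rightarrow> ('a \<Rightarrow> 'a \<Rightarrow> bool) \<Rightarrow> nat" where
  "max_deg V E = Max (deg E ` V)"

definition leaves :: "'a set \<Rightarrow> ('a \<Rightarrow> 'a \<Rightarrow> bool) \<Rightarrow> 'a set" where
  "leaves V E = {v \<in> V. deg E v = 1}"

text \<open>A rotation system: at each vertex v, rot v is a cyclic permutation of the neighbours
  of v (the clockwise order of the edges around v in the embedding). For a tree every
  rotation system is a planar embedding.\<close>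
definition rotation_system :: "'a set \<Rightarrow> ('a \<Rightarrow> 'a \<Rightarrow> bool) \<Rightarrow> ('a \<Rightarrow> 'a \<Rightarrow> 'a) \<Rightarrow> bool" where
  "rotation_system V E rot \<longleftrightarrow>
     (\<forall>v\<in>V. bij_betw (rot v) (nbrs E v) (nbrs E v) \<and>
        (\<forall>u\<in>nbrs E v. \<forall>w\<in>nbrs E v. \<exists>k. (rot v ^^ k) u = w))"

text \<open>Face-tracing successor on darts (directed edges).\<close>
definition face_next :: "('a \<Rightarrow> 'a \<Rightarrow> 'a) \<Rightarrow> 'a \<times> 'a \<Rightarrow> 'a \<times> 'a" where
  "face_next rot d = (snd d, rot (snd d) (fst d))"

text \<open>l' is the leaf following the leaf l along the boundary walk of the (unique) face
  of the embedded tree, i.e. the next leaf in the cyclic order of the embedding.\<close>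
definition cyc_adj :: "'a set \<Rightarrow> ('a \<Rightarrow> 'a \<Rightarrow> bool) \<Rightarrow> ('a \<Rightarrow> 'a \<Rightarrow> 'a) \<Rightarrow> 'a \<Rightarrow> 'a \<Rightarrow> bool" where
  "cyc_adj V T rot l l' \<longleftrightarrow> l \<in> leaves V T \<and> l' \<in> leaves V T \<and>
     (\<exists>p k. T l p \<and> 0 < k \<and> snd ((face_next rot ^^ k) (l, p)) = l' \<and>
        (\<forall>j. 0 < j \<and> j < k \<longrightarrow> snd ((face_next rot ^^ j) (l, p)) \<notin> leaves V T))"

definition halin_adj :: "'a set \<Rightarrow> ('a \<Rightarrow> 'a \<Rightarrow> bool) \<Rightarrow> ('a \<Rightarrow> 'a \<Rightarrow> 'a) \<Rightarrow> 'a \<Rightarrow> 'a \<Rightarrow> bool" where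
  "halin_adj V T rot u v \<longleftrightarrow> T u v \<or> cyc_adj V T rot u v \<or> cyc_adj V T rot v u"

definition gen_halin :: "'a set \<Rightarrow> ('a \<Rightarrow> 'a \<Rightarrow> bool) \<Rightarrow> ('a \<Rightarrow> 'a \<Rightarrow> 'a) \<Rightarrow> bool" where
  "gen_halin V T rot \<longleftrightarrow> is_tree V T \<and> 3 \<le> max_deg V T \<and> rotation_system V T rot"

definition lly_measure :: "('a \<Rightarrow> 'a \<Rightarrow> bool) \<Rightarrow> real \<Rightarrow> 'a \<Rightarrow> 'a \<Rightarrow> real" where
  "lly_measure E \<alpha> v w =
     (if w = v then \<alpha> else if E v w then (1 - \<alpha>) / real (deg E v) else 0)"

definition couplings :: "'a set \<Rightarrow> ('a \<Rightarrow> real) \<Rightarrow> ('a \<Rightarrow> real) \<Rightarrow> ('a \<Rightarrow> 'a \<Rightarrow> real) set" where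
  "couplings V m1 m2 = {\<pi>. (\<forall>a b. 0 \<le> \<pi> a b) \<and>
     (\<forall>a\<in>V. (\<Sum>b\<in>V. \<pi> a b) = m1 a) \<and> (\<forall>b\<in>V. (\<Sum>a\<in>V. \<pi> a b) = m2 b)}"

definition wasserstein :: "'a set \<Rightarrow> ('a \<Rightarrow> 'a \<Rightarrow> bool) \<Rightarrow> ('a \<Rightarrow> real) \<Rightarrow> ('a \<Rightarrow> real) \<Rightarrow> real" where
  "wasserstein V E m1 m2 =
     Inf {(\<Sum>a\<in>V. \<Sum>b\<in>V. \<pi> a b * real (gdist E a b)) | \<pi>. \<pi> \<in> couplings V m1 m2}"

definition kappa_alpha :: "'a set \<Rightarrow> ('a \<Rightarrow> 'a \<Rightarrow> bool) \<Rightarrow> real \<Rightarrow> 'a \<Rightarrow> 'a \<Rightarrow> real" where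
  "kappa_alpha V E \<alpha> u v = 1 - wasserstein V E (lly_measure E \<alpha> u) (lly_measure E \<alpha> v)"

definition kappa_lly :: "'a set \<Rightarrow> ('a \<Rightarrow> 'a \<Rightarrow> bool) \<Rightarrow> 'a \<Rightarrow> 'a \<Rightarrow> real" where
  "kappa_lly V E u v = Lim (at_left 1) (\<lambda>\<alpha>. kappa_alpha V E \<alpha> u v / (1 - \<alpha>))"

definition tcomp :: "'a set \<Rightarrow> ('a \<Rightarrow> 'a \<Rightarrow> bool) \<Rightarrow> 'a \<Rightarrow> 'a \<Rightarrow> 'a set" where
  "tcomp V T x y = {z \<in> V - {x}. \<exists>n. walk_of_len (\<lambda>a b. T a b \<and> a \<noteq> x \<and> b \<noteq> x) n y z}"

end

theory Submission
  imports Defs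
begin

text \<open>
  Let A be the branch of T - x at y and A' the next branch around x, the one at rot x y.
  The boundary walk of the embedded tree that starts along the edge from x to y is an Euler
  tour of A, then of A', then of the branch after A', which is not A because x has degree at
  least 3; the cycle C visits the leaves in the order of this walk. Suppose A and A' both
  contain two leaves, and let u be the last leaf of A and v the first leaf of A'. Then u v is
  an edge of C whose ends have degree 3 in H(T, C), and no triangle or quadrilateral passes
  through it: besides v, the neighbours of u are its tree neighbour and its predecessor on C,
  both in A; besides u, those of v are its tree neighbour and its successor on C, both in A',
  and the successor of that successor lies outside A.
  For such an edge a potential that is 1-Lipschitz on the two supports shows that the
  transport distance between the two lazy random walk measures is at least 1 for every
  idleness, so every kappa_alpha is at most 0; as kappa_alpha / (1 - alpha) is nondecreasing
  in alpha, its limit, the Lin-Lu-Yau curvature of u v, is at most 0. The claim about the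
  branch before A follows by applying this to that branch and A.
\<close>

lemma obtain_two_largest:
  fixes S :: "'a::linorder set"
  assumes "finite S" "2 \<le> card S"
  obtains j1 j2 where "j1 < j2" "{j1..} \<inter> S = {j1, j2}"
proof -
  have "S \<noteq> {}" "S - {Max S} \<noteq> {}"
    using assms card_le_Suc0_iff_eq[of S] by (auto simp: card_Diff_singleton_if)
  define j2 where "j2 = Max S"
  define j1 where "j1 = Max (S - {j2})"
  have "j2 \<in> S" using assms(1) \<open>S \<noteq> {}\<close> by (simp add: j2_def)
  moreover have "j1 \<in> S - {j2}"
    unfolding j1_def using assms(1) \<open>S - {Max S} \<noteq> {}\<close> by (intro Max_in) (auto simp: j2_def)
  moreover have "j \<le> j2" "j \<noteq> j2 \<Longrightarrow> j \<le> j1" if "j \<in> S" for j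
    using that assms(1) by (simp_all add: j1_def j2_def)
  ultimately have "j1 < j2" "{j1..} \<inter> S = {j1, j2}"
    by (auto intro: antisym simp: order.strict_iff_order)
  then show ?thesis by (rule that)
qed

lemma obtain_two_smallest:
  fixes S :: "'a::linorder set"
  assumes "finite S" "2 \<le> card S"
  obtains m1 m2 where "m1 < m2" "{..m2} \<inter> S = {m1, m2}"
proof -
  have "S \<noteq> {}" "S - {Min S} \<noteq> {}"
    using assms card_le_Suc0_iff_eq[of S] by (auto simp: card_Diff_singleton_if)
  define m1 where "m1 = Min S"
  define m2 where "m2 = Min (S - {m1})"
  have "m1 \<in> S" using assms(1) \<open>S \<noteq> {}\<close> by (simp add: m1_def)
  moreover have "m2 \<in> S - {m1}"
    unfolding m2_def using assms(1) \<open>S - {Min S} \<noteq> {}\<close> by (intro Min_in) (auto simp: m1_def)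
  moreover have "m1 \<le> j" "j \<noteq> m1 \<Longrightarrow> m2 \<le> j" if "j \<in> S" for j
    using that assms(1) by (simp_all add: m1_def m2_def)
  ultimately have "m1 < m2" "{..m2} \<inter> S = {m1, m2}"
    by (auto intro: antisym simp: order.strict_iff_order)
  then show ?thesis by (rule that)
qed

lemma obtain_consecutive_across_intervals:
  fixes P :: "nat set"
  assumes "2 \<le> card ({..K1} \<inter> P)" "2 \<le> card ({Suc K1..K2} \<inter> P)" "{Suc K2..K3} \<inter> P \<noteq> {}"
  obtains j1 j2 m1 m2 t where "j1 < j2" "j2 < m1" "m1 < m2" "m2 < t"
    "j1 \<in> P" "j2 \<in> P" "m1 \<in> P" "m2 \<in> P" "t \<in> P" "j2 \<le> K1" "Suc K1 \<le> m1" "m2 \<le> K2" "t \<le> K3"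
    "{j1<..<j2} \<inter> P = {}" "{j2<..<m1} \<inter> P = {}" "{m1<..<m2} \<inter> P = {}" "{m2<..<t} \<inter> P = {}"
proof -
  obtain j1 j2 where j: "j1 < j2" "{j1..} \<inter> ({..K1} \<inter> P) = {j1, j2}"
    using assms(1) by (rule obtain_two_largest[rotated]) auto
  obtain m1 m2 where m: "m1 < m2" "{..m2} \<inter> ({Suc K1..K2} \<inter> P) = {m1, m2}"
    using assms(2) by (rule obtain_two_smallest[rotated]) auto
  obtain r where r: "r \<in> {Suc K2..K3} \<inter> P" using assms(3) by blast
  have "j1 \<in> {j1..} \<inter> ({..K1} \<inter> P)" "j2 \<in> {j1..} \<inter> ({..K1} \<inter> P)"
    unfolding j(2) by simp_all
  then have j_mem: "j1 \<in> P" "j2 \<in> P" "j2 \<le> K1" by simp_all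
  have j_top: "s = j1 \<or> s = j2" if "s \<in> P" "j1 \<le> s" "s \<le> K1" for s
  proof -
    have "s \<in> {j1..} \<inter> ({..K1} \<inter> P)" using that by simp
    then show ?thesis unfolding j(2) by simp
  qed
  have "m1 \<in> {..m2} \<inter> ({Suc K1..K2} \<inter> P)" "m2 \<in> {..m2} \<inter> ({Suc K1..K2} \<inter> P)"
    unfolding m(2) by simp_all
  then have m_mem: "m1 \<in> P" "m2 \<in> P" "Suc K1 \<le> m1" "m2 \<le> K2" by simp_all
  have m_bot: "s = m1 \<or> s = m2" if "s \<in> P" "Suc K1 \<le> s" "s \<le> m2" for s
  proof -
    have "s \<in> {..m2} \<inter> ({Suc K1..K2} \<inter> P)" using that m_mem by simp
    then show ?thesis unfolding m(2) by simp
  qed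
  define t where "t = (LEAST t. m2 < t \<and> t \<in> P)"
  have "m2 < r" using r m_mem by simp
  then have t: "m2 < t" "t \<in> P" "t \<le> r"
    using LeastI[of "\<lambda>t. m2 < t \<and> t \<in> P" r] Least_le[of "\<lambda>t. m2 < t \<and> t \<in> P" r] r
    by (auto simp: t_def)
  have "{j1<..<j2} \<inter> P = {}"
  proof -
    have False if "s \<in> P" "j1 < s" "s < j2" for s
      using j_top[OF that(1)] that j_mem(3) by simp
    then show ?thesis by auto
  qed
  moreover have "{j2<..<m1} \<inter> P = {}"
  proof -
    have False if "s \<in> P" "j2 < s" "s < m1" for s
      using j_top[OF that(1)] m_bot[OF that(1)] that j(1) m(1) by (cases "s \<le> K1") auto
    then show ?thesis by auto
  qed
  moreover have "{m1<..<m2} \<inter> P = {}"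
  proof -
    have False if "s \<in> P" "m1 < s" "s < m2" for s
      using m_bot[OF that(1)] that m_mem(3) by simp
    then show ?thesis by auto
  qed
  moreover have "{m2<..<t} \<inter> P = {}"
  proof -
    have False if "s \<in> P" "m2 < s" "s < t" for s
      using not_less_Least[of s "\<lambda>t. m2 < t \<and> t \<in> P"] that by (simp add: t_def)
    then show ?thesis by auto
  qed
  moreover have "j2 < m1" using j_mem(3) m_mem(3) by simp
  ultimately show ?thesis using that j(1) m(1) j_mem m_mem t r by auto
qed

lemma tendsto_at_left_SUP_mono:
  fixes f :: "real \<Rightarrow> real"
  assumes "a < b" and mono: "\<And>x y. a \<le> x \<Longrightarrow> x \<le> y \<Longrightarrow> y < b \<Longrightarrow> f x \<le> f y"
    and bdd: "bdd_above (f ` {a..<b})"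
  shows "(f \<longlongrightarrow> (SUP x\<in>{a..<b}. f x)) (at_left b)"
proof (rule order_tendstoI)
  fix c assume "c < (SUP x\<in>{a..<b}. f x)"
  then obtain x0 where x0: "x0 \<in> {a..<b}" "c < f x0"
    using less_cSUP_iff[OF _ bdd] \<open>a < b\<close> by auto
  have "eventually (\<lambda>x. x \<in> {x0<..<b}) (at_left b)"
    using x0 by (intro eventually_at_left_real) auto
  then show "eventually (\<lambda>x. c < f x) (at_left b)"
  proof (rule eventually_mono)
    fix x assume "x \<in> {x0<..<b}"
    then have "f x0 \<le> f x" using mono[of x0 x] x0(1) by simp
    with x0(2) show "c < f x" by simp
  qed
next
  fix c assume "(SUP x\<in>{a..<b}. f x) < c"
  have "eventually (\<lambda>x. x \<in> {a<..<b}) (at_left b)"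
    using \<open>a < b\<close> by (intro eventually_at_left_real) auto
  then show "eventually (\<lambda>x. f x < c) (at_left b)"
  proof (rule eventually_mono)
    fix x assume "x \<in> {a<..<b}"
    then have "f x \<le> (SUP x\<in>{a..<b}. f x)" using bdd by (intro cSUP_upper) auto
    with \<open>(SUP x\<in>{a..<b}. f x) < c\<close> show "f x < c" by simp
  qed
qed

section \<open>Walks and distances\<close>

lemma walk_of_len_iff_relpowp: "walk_of_len E n u v \<longleftrightarrow> (E ^^ n) u v"
proof (induction n arbitrary: v)
  case 0
  then show ?case by (auto simp: walk_of_len_def)
next
  case (Suc n)
  show ?case
  proof
    assume "walk_of_len E (Suc n) u v"
    then obtain p where p: "p 0 = u" "p (Suc n) = v" "\<forall>i<Suc n. E (p i) (p (Suc i))"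
      unfolding walk_of_len_def by blast
    have "walk_of_len E n u (p n)" unfolding walk_of_len_def using p by auto
    with Suc.IH p show "(E ^^ Suc n) u v" by (auto intro: relpowp_Suc_I)
  next
    assume "(E ^^ Suc n) u v"
    then obtain w where w: "(E ^^ n) u w" "E w v" by (rule relpowp_Suc_E)
    then obtain p where p: "p 0 = u" "p n = w" "\<forall>i<n. E (p i) (p (Suc i))"
      using Suc.IH unfolding walk_of_len_def by blast
    have "\<forall>i<Suc n. E ((p(Suc n := v)) i) ((p(Suc n := v)) (Suc i))"
      using p w by (auto simp: less_Suc_eq)
    with p show "walk_of_len E (Suc n) u v"
      unfolding walk_of_len_def by (intro exI[of _ "p(Suc n := v)"]) auto
  qed
qed

lemma ex_walk_of_len_iff_rtranclp: "(\<exists>n. walk_of_len E n u v) \<longleftrightarrow> E\<^sup>*\<^sup>* u v"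
  by (simp add: walk_of_len_iff_relpowp rtranclp_power)

lemma rtranclp_obtain_injective_walk:
  assumes "E\<^sup>*\<^sup>* a c"
  obtains n p where "p 0 = a" "p n = c" "\<forall>i<n. E (p i) (p (Suc i))" "inj_on p {..n}"
proof -
  define n where "n = (LEAST n. walk_of_len E n a c)"
  have "walk_of_len E n a c"
    unfolding n_def using assms ex_walk_of_len_iff_rtranclp by (metis LeastI_ex)
  then obtain p where p: "p 0 = a" "p n = c" "\<forall>i<n. E (p i) (p (Suc i))"
    unfolding walk_of_len_def by blast
  have "inj_on p {..n}"
  proof (rule ccontr)
    assume "\<not> inj_on p {..n}"
    then obtain i j where ij: "i < j" "j \<le> n" "p i = p j"
      unfolding inj_on_def by (metis atMost_iff linorder_neqE_nat)
    \<comment> \<open>cutting out the closed subwalk from i to j gives a shorter walk\<close>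
    define q where "q k = (if k \<le> i then p k else p (k + (j - i)))" for k
    have "walk_of_len E (n - (j - i)) a c"
      unfolding walk_of_len_def
    proof (intro exI conjI allI impI)
      show "q 0 = a" using p by (simp add: q_def)
      show "q (n - (j - i)) = c"
        using p ij by (cases "j = n") (auto simp: q_def)
      fix k assume k: "k < n - (j - i)"
      consider "k < i" | "k = i" | "k > i" by linarith
      then show "E (q k) (q (Suc k))"
        by cases (use p ij k in \<open>auto simp: q_def\<close>)
    qed
    then have "n \<le> n - (j - i)" unfolding n_def by (rule Least_le)
    with ij show False by linarith
  qed
  with p that show ?thesis by blast
qed

lemma relpowp_gdist: "E\<^sup>*\<^sup>* a b \<Longrightarrow> (E ^^ gdist E a b) a b"
  unfolding gdist_def walk_of_len_iff_relpowp[symmetric]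
  by (rule LeastI_ex) (simp add: ex_walk_of_len_iff_rtranclp)

lemma gdist_ge_1: "E\<^sup>*\<^sup>* a b \<Longrightarrow> a \<noteq> b \<Longrightarrow> 1 \<le> gdist E a b"
  using relpowp_gdist by (cases "gdist E a b") fastforce+

lemma gdist_ge_2:
  assumes "E\<^sup>*\<^sup>* a b" "a \<noteq> b" "\<not> E a b"
  shows "2 \<le> gdist E a b"
proof -
  have walk: "(E ^^ gdist E a b) a b" using assms(1) by (rule relpowp_gdist)
  have "gdist E a b \<noteq> 0"
  proof
    assume "gdist E a b = 0"
    with walk assms(2) show False by simp
  qed
  moreover have "gdist E a b \<noteq> 1"
  proof
    assume "gdist E a b = 1"
    with walk assms(3) show False by auto
  qed
  ultimately show ?thesis by linarith
qed

lemma gdist_adj: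
  assumes "E a b" "a \<noteq> b"
  shows "gdist E a b = 1"
proof -
  have "walk_of_len E 1 a b"
    unfolding walk_of_len_def using assms(1) by (intro exI[of _ "\<lambda>i. if i = 0 then a else b"]) simp
  then have "gdist E a b \<le> 1" unfolding gdist_def by (rule Least_le)
  with gdist_ge_1[OF r_into_rtranclp[of E, OF assms(1)] assms(2)] show ?thesis by simp
qed

section \<open>Optimal transport and Lin-Lu-Yau curvature\<close>

definition transport_cost :: "'a set \<Rightarrow> ('a \<Rightarrow> 'a \<Rightarrow> bool) \<Rightarrow> ('a \<Rightarrow> 'a \<Rightarrow> real) \<Rightarrow> real" where
  "transport_cost V E \<pi> = (\<Sum>a\<in>V. \<Sum>b\<in>V. \<pi> a b * real (gdist E a b))"

lemma wasserstein_eq_Inf: "wasserstein V E m1 m2 = Inf (transport_cost V E ` couplings V m1 m2)"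
  by (simp add: wasserstein_def transport_cost_def Setcompr_eq_image)

lemma transport_cost_nonneg: "\<pi> \<in> couplings V m1 m2 \<Longrightarrow> 0 \<le> transport_cost V E \<pi>"
  by (auto simp: transport_cost_def couplings_def intro!: sum_nonneg)

lemma transport_cost_ge_potential:
  assumes fin: "finite V" and \<pi>: "\<pi> \<in> couplings V m1 m2"
    and lip: "\<And>a b. a \<in> V \<Longrightarrow> b \<in> V \<Longrightarrow> m1 a \<noteq> 0 \<Longrightarrow> m2 b \<noteq> 0 \<Longrightarrow> f b - f a \<le> real (gdist E a b)"
  shows "(\<Sum>b\<in>V. m2 b * f b) - (\<Sum>a\<in>V. m1 a * f a) \<le> transport_cost V E \<pi>"
proof -
  have nonneg: "0 \<le> \<pi> a b" for a b using \<pi> by (simp add: couplings_def)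
  have row: "(\<Sum>b\<in>V. \<pi> a b) = m1 a" if "a \<in> V" for a using \<pi> that by (simp add: couplings_def)
  have col: "(\<Sum>a\<in>V. \<pi> a b) = m2 b" if "b \<in> V" for b using \<pi> that by (simp add: couplings_def)
  have "\<pi> a b * (f b - f a) \<le> \<pi> a b * real (gdist E a b)" if "a \<in> V" "b \<in> V" for a b
  proof (cases "m1 a = 0 \<or> m2 b = 0")
    case True
    \<comment> \<open>a coupling puts no mass outside the product of the supports\<close>
    then have "\<pi> a b = 0"
    proof
      assume "m1 a = 0"
      then show ?thesis
        using row[OF that(1)] sum_nonneg_eq_0_iff[OF fin, of "\<pi> a"] nonneg that(2) by simp
    next
      assume "m2 b = 0"
      then show ?thesis
        using col[OF that(2)] sum_nonneg_eq_0_iff[OF fin, of "\<lambda>a'. \<pi> a' b"] nonneg that(1) by simp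
    qed
    then show ?thesis by simp
  next
    case False
    then show ?thesis using lip that nonneg by (simp add: mult_left_mono)
  qed
  then have "(\<Sum>a\<in>V. \<Sum>b\<in>V. \<pi> a b * (f b - f a)) \<le> transport_cost V E \<pi>"
    unfolding transport_cost_def by (intro sum_mono) auto
  moreover have "(\<Sum>a\<in>V. \<Sum>b\<in>V. \<pi> a b * f b) = (\<Sum>b\<in>V. m2 b * f b)"
    by (subst sum.swap) (simp add: col sum_distrib_right[symmetric])
  moreover have "(\<Sum>a\<in>V. \<Sum>b\<in>V. \<pi> a b * f a) = (\<Sum>a\<in>V. m1 a * f a)"
    by (simp add: row sum_distrib_right[symmetric])
  ultimately show ?thesis by (simp add: right_diff_distrib sum_subtractf)
qed

lemma couplings_convex:
  assumes "\<pi> \<in> couplings V m1 m2" "\<pi>' \<in> couplings V m1' m2'" "0 \<le> t" "t \<le> 1"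
  shows "(\<lambda>a b. t * \<pi> a b + (1 - t) * \<pi>' a b)
    \<in> couplings V (\<lambda>a. t * m1 a + (1 - t) * m1' a) (\<lambda>b. t * m2 b + (1 - t) * m2' b)"
  using assms by (simp add: couplings_def sum.distrib sum_distrib_left[symmetric])

lemma transport_cost_convex:
  "transport_cost V E (\<lambda>a b. t * \<pi> a b + (1 - t) * \<pi>' a b)
    = t * transport_cost V E \<pi> + (1 - t) * transport_cost V E \<pi>'"
proof -
  have "(t * \<pi> a b + (1 - t) * \<pi>' a b) * g = t * (\<pi> a b * g) + (1 - t) * (\<pi>' a b * g)"
    for a b and g :: real
    by (simp add: algebra_simps)
  then show ?thesis unfolding transport_cost_def by (simp add: sum.distrib sum_distrib_left)
qed

lemma lly_measure_affine:
  "lly_measure E (t * \<alpha> + (1 - t)) w z = t * lly_measure E \<alpha> w z + (1 - t) * lly_measure E 1 w z"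
  by (auto simp: lly_measure_def field_simps)

locale lly_edge =
  fixes V :: "'a set" and H :: "'a \<Rightarrow> 'a \<Rightarrow> bool" and u v :: 'a
  assumes finite_V: "finite V"
    and adj_sym: "\<And>a b. H a b \<Longrightarrow> H b a"
    and adj_in_V: "\<And>a b. H a b \<Longrightarrow> a \<in> V \<and> b \<in> V"
    and adj_uv: "H u v"
    and not_adj_uu: "\<not> H u u" and not_adj_vv: "\<not> H v v"
begin

abbreviation W :: "real \<Rightarrow> real" where
  "W \<alpha> \<equiv> wasserstein V H (lly_measure H \<alpha> u) (lly_measure H \<alpha> v)"

lemma u_neq_v: "u \<noteq> v"
  using adj_uv not_adj_uu by auto

lemma finite_nbrs: "finite (nbrs H w)"
  using finite_V adj_in_V by (auto simp: nbrs_def intro: rev_finite_subset)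

lemma deg_pos: "w \<in> {u, v} \<Longrightarrow> 0 < deg H w"
  using adj_uv adj_sym[OF adj_uv] finite_nbrs
  by (auto simp: deg_def card_gt_0_iff nbrs_def)

lemma sum_lly_measure:
  assumes w: "w \<in> {u, v}"
  shows "(\<Sum>z\<in>V. lly_measure H \<alpha> w z * g z)
    = \<alpha> * g w + (1 - \<alpha>) / real (deg H w) * (\<Sum>z\<in>nbrs H w. g z)"
proof -
  have wV: "w \<in> V" using w adj_uv adj_in_V by auto
  have "\<not> H w w" using w not_adj_uu not_adj_vv by auto
  then have nbrs_w: "nbrs H w = {z \<in> V - {w}. H w z}" using adj_in_V by (auto simp: nbrs_def)
  have "(\<Sum>z\<in>V. lly_measure H \<alpha> w z * g z)
      = \<alpha> * g w + (\<Sum>z\<in>V - {w}. lly_measure H \<alpha> w z * g z)"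
    using wV finite_V by (simp add: sum.remove lly_measure_def)
  also have "(\<Sum>z\<in>V - {w}. lly_measure H \<alpha> w z * g z)
      = (\<Sum>z\<in>V - {w}. if H w z then (1 - \<alpha>) / real (deg H w) * g z else 0)"
    by (rule sum.cong) (auto simp: lly_measure_def)
  also have "\<dots> = (1 - \<alpha>) / real (deg H w) * (\<Sum>z\<in>nbrs H w. g z)"
    using finite_V by (simp add: sum.inter_filter[symmetric] nbrs_w sum_distrib_left)
  finally show ?thesis .
qed

lemma sum_lly_measure_eq_1: "w \<in> {u, v} \<Longrightarrow> (\<Sum>z\<in>V. lly_measure H \<alpha> w z) = 1"
  using sum_lly_measure[of w \<alpha> "\<lambda>_. 1"] deg_pos[of w] by (simp add: deg_def)

lemma lly_measure_nonneg: "0 \<le> \<alpha> \<Longrightarrow> \<alpha> \<le> 1 \<Longrightarrow> 0 \<le> lly_measure H \<alpha> w z"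
  by (simp add: lly_measure_def)

lemma couplings_nonempty:
  assumes "0 \<le> \<alpha>" "\<alpha> \<le> 1"
  shows "couplings V (lly_measure H \<alpha> u) (lly_measure H \<alpha> v) \<noteq> {}"
proof -
  have "(\<lambda>a b. lly_measure H \<alpha> u a * lly_measure H \<alpha> v b)
      \<in> couplings V (lly_measure H \<alpha> u) (lly_measure H \<alpha> v)"
    using assms sum_lly_measure_eq_1[of u \<alpha>] sum_lly_measure_eq_1[of v \<alpha>] lly_measure_nonneg
    by (simp add: couplings_def sum_distrib_left[symmetric] sum_distrib_right[symmetric])
  then show ?thesis by blast
qed

lemma bdd_below_transport_cost: "bdd_below (transport_cost V H ` couplings V m1 m2)"
  by (rule bdd_belowI2[of _ 0]) (rule transport_cost_nonneg)

definition point_coupling :: "'a \<Rightarrow> 'a \<Rightarrow> real" where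
  "point_coupling a b = (if a = u \<and> b = v then 1 else 0)"

lemma point_coupling_in_couplings:
  "point_coupling \<in> couplings V (lly_measure H 1 u) (lly_measure H 1 v)"
  using adj_in_V[OF adj_uv] finite_V
  by (auto simp: couplings_def point_coupling_def lly_measure_def if_distrib cong: if_cong)

lemma transport_cost_point_coupling: "transport_cost V H point_coupling = 1"
proof -
  have uv: "u \<in> V" "v \<in> V" using adj_in_V[OF adj_uv] by auto
  have row: "(\<Sum>b\<in>V. point_coupling a b * real (gdist H a b))
      = (if a = u then real (gdist H u v) else 0)" for a
  proof -
    have "(\<Sum>b\<in>V. point_coupling a b * real (gdist H a b))
        = (\<Sum>b\<in>V. if b = v then (if a = u then real (gdist H u v) else 0) else 0)"
      by (rule sum.cong) (auto simp: point_coupling_def)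
    then show ?thesis using uv finite_V by simp
  qed
  have "transport_cost V H point_coupling = real (gdist H u v)"
    using uv finite_V by (simp add: transport_cost_def row)
  with gdist_adj[of H, OF adj_uv u_neq_v] show ?thesis by simp
qed

lemma W_convex:
  assumes "0 \<le> \<alpha>" "\<alpha> \<le> 1" and "0 < t" "t \<le> 1"
  shows "W (t * \<alpha> + (1 - t)) \<le> t * W \<alpha> + (1 - t)"
proof -
  define \<gamma> where "\<gamma> = t * \<alpha> + (1 - t)"
  \<comment> \<open>mixing any coupling at \<alpha> with the point coupling at 1 gives a coupling at \<gamma>\<close>
  have "(W \<gamma> - (1 - t)) / t \<le> transport_cost V H \<pi>"
    if \<pi>: "\<pi> \<in> couplings V (lly_measure H \<alpha> u) (lly_measure H \<alpha> v)" for \<pi>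
  proof -
    have mix: "lly_measure H \<gamma> w = (\<lambda>z. t * lly_measure H \<alpha> w z + (1 - t) * lly_measure H 1 w z)"
      for w by (simp add: \<gamma>_def fun_eq_iff lly_measure_affine)
    have "(\<lambda>a b. t * \<pi> a b + (1 - t) * point_coupling a b)
        \<in> couplings V (lly_measure H \<gamma> u) (lly_measure H \<gamma> v)"
      unfolding mix using couplings_convex[OF \<pi> point_coupling_in_couplings, of t] assms by simp
    then have "W \<gamma> \<le> transport_cost V H (\<lambda>a b. t * \<pi> a b + (1 - t) * point_coupling a b)"
      unfolding wasserstein_eq_Inf by (intro cInf_lower bdd_below_transport_cost) auto
    also have "\<dots> = t * transport_cost V H \<pi> + (1 - t)"
      by (simp add: transport_cost_convex transport_cost_point_coupling)
    finally show ?thesis using assms by (simp add: divide_simps mult.commute)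
  qed
  then have "(W \<gamma> - (1 - t)) / t \<le> W \<alpha>"
    unfolding wasserstein_eq_Inf[of V H "lly_measure H \<alpha> u"]
    using couplings_nonempty[OF assms(1,2)] by (intro cInf_greatest) auto
  then show ?thesis using assms unfolding \<gamma>_def by (simp add: divide_simps mult.commute)
qed

lemma kappa_ratio_mono:
  assumes "0 \<le> \<alpha>" "\<alpha> < \<gamma>" "\<gamma> < 1"
  shows "kappa_alpha V H \<alpha> u v / (1 - \<alpha>) \<le> kappa_alpha V H \<gamma> u v / (1 - \<gamma>)"
proof -
  define t where "t = (1 - \<gamma>) / (1 - \<alpha>)"
  have t: "0 < t" "t \<le> 1" using assms by (auto simp: t_def)
  have "t * (1 - \<alpha>) = 1 - \<gamma>" using assms by (simp add: t_def)
  then have "t * \<alpha> + (1 - t) = \<gamma>" by (simp add: algebra_simps)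
  have "t * (1 - W \<alpha>) \<le> 1 - W \<gamma>"
    using W_convex[of \<alpha> t] assms t \<open>t * \<alpha> + (1 - t) = \<gamma>\<close> by (simp add: algebra_simps)
  then have "t * (1 - W \<alpha>) / (1 - \<gamma>) \<le> (1 - W \<gamma>) / (1 - \<gamma>)"
    using assms by (simp add: divide_right_mono)
  moreover have "t * (1 - W \<alpha>) / (1 - \<gamma>) = (1 - W \<alpha>) / (1 - \<alpha>)"
    using assms by (simp add: t_def)
  ultimately show ?thesis by (simp add: kappa_alpha_def)
qed

lemma kappa_lly_nonposI:
  assumes "\<And>\<alpha>. 0 \<le> \<alpha> \<Longrightarrow> \<alpha> < 1 \<Longrightarrow> kappa_alpha V H \<alpha> u v \<le> 0"
  shows "kappa_lly V H u v \<le> 0"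
proof -
  define f where "f \<alpha> = kappa_alpha V H \<alpha> u v / (1 - \<alpha>)" for \<alpha>
  have f_nonpos: "f \<alpha> \<le> 0" if "0 \<le> \<alpha>" "\<alpha> < 1" for \<alpha>
    using assms[OF that] that by (simp add: f_def divide_nonpos_pos)
  have "bdd_above (f ` {0..<1})" using f_nonpos by (intro bdd_aboveI2[where M = 0]) auto
  then have "(f \<longlongrightarrow> (SUP \<alpha>\<in>{0..<1}. f \<alpha>)) (at_left 1)"
    using kappa_ratio_mono by (intro tendsto_at_left_SUP_mono) (auto simp: f_def order_le_less)
  then have "kappa_lly V H u v = (SUP \<alpha>\<in>{0..<1}. f \<alpha>)"
    unfolding kappa_lly_def f_def[abs_def] by (intro tendsto_Lim) auto
  also have "\<dots> \<le> 0" using f_nonpos by (intro cSUP_least) auto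
  finally show ?thesis .
qed

end

locale tree_like_edge = lly_edge +
  assumes deg_u: "3 \<le> deg H u" and deg_v: "3 \<le> deg H v"
    and no_triangle: "\<And>a. H u a \<Longrightarrow> a \<noteq> v \<Longrightarrow> \<not> H v a"
    and no_square: "\<And>a b. H u a \<Longrightarrow> a \<noteq> v \<Longrightarrow> H v b \<Longrightarrow> b \<noteq> u \<Longrightarrow> \<not> H a b"
begin

text \<open>A 1-Lipschitz potential on the two supports, certifying \<open>W \<alpha> \<ge> 1\<close> by duality.\<close>
definition potential :: "'a \<Rightarrow> real" where
  "potential z = (if z = u then 1 else if z = v then 2 else if H u z then 0 else 2)"

lemma potential_lipschitz:
  assumes a: "a = u \<or> H u a" and b: "b = v \<or> H v b"
  shows "potential b - potential a \<le> real (gdist H a b)"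
proof -
  have "H\<^sup>*\<^sup>* a u" "H\<^sup>*\<^sup>* v b" using a b adj_sym by auto
  then have reach: "H\<^sup>*\<^sup>* a b" using adj_uv by (meson rtranclp.rtrancl_into_rtrancl rtranclp_trans)
  consider "a = u" "b = u" | "a = u" "b \<noteq> u" | "a = v" | "a \<noteq> u" "a \<noteq> v" "b = v"
    | "a \<noteq> u" "a \<noteq> v" "b \<noteq> v" "b = u" | "a \<noteq> u" "a \<noteq> v" "b \<noteq> v" "b \<noteq> u"
    by blast
  then show ?thesis
  proof cases
    case 2
    then show ?thesis using gdist_ge_1[OF reach] by (auto simp: potential_def)
  next
    case 3
    then show ?thesis using b u_neq_v not_adj_vv by (auto simp: potential_def)
  next
    case 4
    then have "\<not> H a b" using a no_triangle adj_sym by blast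
    with 4 show ?thesis using a gdist_ge_2[OF reach] by (auto simp: potential_def)
  next
    case 5
    then show ?thesis using a gdist_ge_1[OF reach] by (auto simp: potential_def)
  next
    case 6
    then have "\<not> H a b" using a b no_square by blast
    with 6 show ?thesis using a gdist_ge_2[OF reach] by (auto simp: potential_def)
  qed (simp add: potential_def)
qed

lemma expected_potential_u:
  "(\<Sum>z\<in>V. lly_measure H \<alpha> u z * potential z) = \<alpha> + 2 * (1 - \<alpha>) / real (deg H u)"
proof -
  have "(\<Sum>z\<in>nbrs H u. potential z) = potential v + (\<Sum>z\<in>nbrs H u - {v}. potential z)"
    using adj_uv finite_nbrs by (simp add: sum.remove nbrs_def)
  also have "(\<Sum>z\<in>nbrs H u - {v}. potential z) = 0"
    using not_adj_uu by (intro sum.neutral) (auto simp: potential_def nbrs_def)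
  finally show ?thesis
    using sum_lly_measure[of u \<alpha> potential] u_neq_v by (simp add: potential_def)
qed

lemma expected_potential_v:
  "(\<Sum>z\<in>V. lly_measure H \<alpha> v z * potential z)
    = 2 * \<alpha> + (1 - \<alpha>) * (2 - 1 / real (deg H v))"
proof -
  have u_nbr: "u \<in> nbrs H v" using adj_sym[OF adj_uv] by (simp add: nbrs_def)
  have "(\<Sum>z\<in>nbrs H v. potential z) = potential u + (\<Sum>z\<in>nbrs H v - {u}. 2)"
  proof -
    have "potential z = 2" if "z \<in> nbrs H v - {u}" for z
      using that no_triangle[of z] not_adj_vv by (auto simp: potential_def nbrs_def)
    then show ?thesis using u_nbr finite_nbrs by (simp add: sum.remove)
  qed
  also have "\<dots> = 2 * real (deg H v) - 1"
    using u_nbr finite_nbrs deg_v by (simp add: potential_def deg_def card_Diff_singleton of_nat_diff)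
  finally have nbrs_sum: "(\<Sum>z\<in>nbrs H v. potential z) = 2 * real (deg H v) - 1" .
  have "potential v = 2" using u_neq_v by (simp add: potential_def)
  then have "(\<Sum>z\<in>V. lly_measure H \<alpha> v z * potential z)
      = 2 * \<alpha> + (1 - \<alpha>) / real (deg H v) * (2 * real (deg H v) - 1)"
    using sum_lly_measure[of v \<alpha> potential] nbrs_sum by simp
  also have "\<dots> = 2 * \<alpha> + (1 - \<alpha>) * (2 - 1 / real (deg H v))"
    using deg_v by (simp add: field_simps)
  finally show ?thesis .
qed

lemma W_ge_1:
  assumes "0 \<le> \<alpha>" "\<alpha> \<le> 1"
  shows "1 \<le> W \<alpha>"
  unfolding wasserstein_eq_Inf
proof (rule cInf_greatest)
  show "transport_cost V H ` couplings V (lly_measure H \<alpha> u) (lly_measure H \<alpha> v) \<noteq> {}"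
    using couplings_nonempty[OF assms] by simp
next
  fix c assume "c \<in> transport_cost V H ` couplings V (lly_measure H \<alpha> u) (lly_measure H \<alpha> v)"
  then obtain \<pi> where \<pi>: "\<pi> \<in> couplings V (lly_measure H \<alpha> u) (lly_measure H \<alpha> v)"
    and c: "c = transport_cost V H \<pi>" by blast
  have "(\<Sum>z\<in>V. lly_measure H \<alpha> v z * potential z) - (\<Sum>z\<in>V. lly_measure H \<alpha> u z * potential z) \<le> c"
    unfolding c using finite_V \<pi>
    by (rule transport_cost_ge_potential) (auto intro: potential_lipschitz simp: lly_measure_def split: if_splits)
  moreover have "1 / real (deg H v) + 2 / real (deg H u) \<le> 1"
  proof -
    have "1 / real (deg H v) \<le> 1 / 3" "2 / real (deg H u) \<le> 2 / 3"
      using deg_u deg_v by (simp_all add: divide_simps)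
    then show ?thesis by linarith
  qed
  then have "(1 - \<alpha>) * (1 / real (deg H v) + 2 / real (deg H u)) \<le> 1 - \<alpha>"
    using assms by (simp add: mult_left_le)
  ultimately show "1 \<le> c"
    by (simp add: expected_potential_u expected_potential_v algebra_simps)
qed

lemma kappa_lly_nonpos: "kappa_lly V H u v \<le> 0"
  using W_ge_1 by (intro kappa_lly_nonposI) (simp add: kappa_alpha_def)

end

section \<open>Branches of a tree\<close>

definition avoiding :: "('a \<Rightarrow> 'a \<Rightarrow> bool) \<Rightarrow> 'a set \<Rightarrow> 'a \<Rightarrow> 'a \<Rightarrow> bool" where
  "avoiding E S a b \<longleftrightarrow> E a b \<and> a \<notin> S \<and> b \<notin> S"

lemma mem_tcomp_iff: "z \<in> tcomp V T x y \<longleftrightarrow> z \<in> V \<and> z \<noteq> x \<and> (avoiding T {x})\<^sup>*\<^sup>* y z"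
proof -
  have "(\<lambda>a b. T a b \<and> a \<noteq> x \<and> b \<noteq> x) = avoiding T {x}"
    by (auto simp: avoiding_def fun_eq_iff)
  then show ?thesis unfolding tcomp_def ex_walk_of_len_iff_rtranclp by auto
qed

lemma acyclic_nbrs_not_connected_avoiding:
  assumes sym: "symp T" and acyc: "acyclic_graph T"
    and ba: "T b a" and bc: "T b c" and "a \<noteq> c"
  shows "\<not> (avoiding T {b})\<^sup>*\<^sup>* a c"
proof
  assume "(avoiding T {b})\<^sup>*\<^sup>* a c"
  then obtain n p where p: "p 0 = a" "p n = c" "\<forall>i<n. avoiding T {b} (p i) (p (Suc i))"
      "inj_on p {..n}"
    by (rule rtranclp_obtain_injective_walk)
  have "n \<noteq> 0" using p \<open>a \<noteq> c\<close> by (cases n) auto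
  have p_ne_b: "p k \<noteq> b" if "k \<le> n" for k
    using p(3)[rule_format, of k] p(3)[rule_format, of "n - 1"] that \<open>n \<noteq> 0\<close>
    by (cases "k < n") (auto simp: avoiding_def)
  \<comment> \<open>closing the walk through b gives a cycle of length n + 2\<close>
  define q where "q k = (if k \<le> n then p k else b)" for k
  have "inj_on q {..<n+2}"
    using p(4) p_ne_b by (auto simp: inj_on_def q_def less_Suc_eq)
  moreover have "T (q i) (q (Suc i mod (n+2)))" if i: "i < n + 2" for i
  proof -
    consider "i < n" | "i = n" | "i = n + 1" using i by linarith
    then show ?thesis
      by cases (use p ba bc sym in \<open>auto simp: q_def avoiding_def symp_def\<close>)
  qed
  moreover have "3 \<le> n + 2" using \<open>n \<noteq> 0\<close> by simp
  ultimately show False using acyc unfolding acyclic_graph_def by blast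
qed

locale tree_graph =
  fixes V :: "'a set" and T :: "'a \<Rightarrow> 'a \<Rightarrow> bool"
  assumes is_tree: "is_tree V T"
begin

lemma finite_V: "finite V"
  using is_tree by (simp add: is_tree_def simple_graph_def)

lemma edge_sym: "T a b \<Longrightarrow> T b a"
  using is_tree by (simp add: is_tree_def simple_graph_def)

lemma edge_in_V: "T a b \<Longrightarrow> a \<in> V \<and> b \<in> V"
  using is_tree by (simp add: is_tree_def simple_graph_def)

lemma edge_irrefl: "T a b \<Longrightarrow> a \<noteq> b"
  using is_tree by (auto simp: is_tree_def simple_graph_def)

lemma connected: "a \<in> V \<Longrightarrow> b \<in> V \<Longrightarrow> T\<^sup>*\<^sup>* a b"
  using is_tree
  by (auto simp: is_tree_def connected_graph_def ex_walk_of_len_iff_rtranclp[symmetric])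

lemma V_nonempty: "V \<noteq> {}"
  using is_tree by (simp add: is_tree_def connected_graph_def)

lemma symp_edge: "symp T"
  using edge_sym by (rule sympI)

lemma acyclic: "acyclic_graph T"
  using is_tree by (simp add: is_tree_def)

lemma mem_nbrs_iff: "w \<in> nbrs T b \<longleftrightarrow> T b w"
  by (simp add: nbrs_def)

lemma finite_nbrs: "finite (nbrs T v)"
  using finite_V edge_in_V by (auto simp: nbrs_def intro: finite_subset)

lemma leaf_nbrs:
  assumes "l \<in> leaves V T" "T l q"
  shows "nbrs T l = {q}"
proof -
  have "card (nbrs T l) = 1" using assms by (simp add: leaves_def deg_def)
  then obtain w where "nbrs T l = {w}" by (rule card_1_singletonE)
  with assms show ?thesis by (auto simp: mem_nbrs_iff)
qed

lemma leaf_has_nbr: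
  assumes "l \<in> leaves V T"
  obtains p where "T l p"
proof -
  have "card (nbrs T l) = 1" using assms by (simp add: leaves_def deg_def)
  then obtain p where "nbrs T l = {p}" by (rule card_1_singletonE)
  then show ?thesis using that by (auto simp: nbrs_def)
qed

lemma avoiding_sym: "(avoiding T S)\<^sup>*\<^sup>* a b \<Longrightarrow> (avoiding T S)\<^sup>*\<^sup>* b a"
proof -
  have "symp (avoiding T S)" by (auto simp: symp_def avoiding_def intro: edge_sym)
  then show "(avoiding T S)\<^sup>*\<^sup>* a b \<Longrightarrow> (avoiding T S)\<^sup>*\<^sup>* b a"
    by (meson sympD symp_rtranclp)
qed

lemma avoiding_notin: "(avoiding T S)\<^sup>*\<^sup>* c z \<Longrightarrow> c \<notin> S \<Longrightarrow> z \<notin> S"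
  by (induction rule: rtranclp_induct) (auto simp: avoiding_def)

lemma avoiding_mono: "(avoiding T S)\<^sup>*\<^sup>* c z \<Longrightarrow> S' \<subseteq> S \<Longrightarrow> (avoiding T S')\<^sup>*\<^sup>* c z"
proof -
  assume "(avoiding T S)\<^sup>*\<^sup>* c z" "S' \<subseteq> S"
  moreover have "\<And>p q. avoiding T S p q \<Longrightarrow> avoiding T S' p q"
    using \<open>S' \<subseteq> S\<close> by (auto simp: avoiding_def)
  ultimately show ?thesis by (metis mono_rtranclp)
qed

lemma avoiding_split:
  assumes "(avoiding T {b})\<^sup>*\<^sup>* c z" "c \<noteq> a" "c \<noteq> b"
  shows "(avoiding T {a,b})\<^sup>*\<^sup>* c z \<or> (avoiding T {b})\<^sup>*\<^sup>* c a"
  using assms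
proof (induction rule: rtranclp_induct)
  case (step y z)
  show ?case
  proof (cases "(avoiding T {a,b})\<^sup>*\<^sup>* c y")
    case True
    have "y \<notin> {a,b}" using avoiding_notin[OF True] step.prems by auto
    with step.hyps(2) consider "avoiding T {a,b} y z" | "z = a" by (auto simp: avoiding_def)
    then show ?thesis
    proof cases
      case 1
      then show ?thesis using True by (meson rtranclp.rtrancl_into_rtrancl)
    next
      case 2
      have "(avoiding T {b})\<^sup>*\<^sup>* c y" using avoiding_mono[OF True] by blast
      then show ?thesis using 2 step.hyps(2) by (meson rtranclp.rtrancl_into_rtrancl)
    qed
  qed (use step in blast)
qed simp

lemma avoiding_first_step:
  assumes "(avoiding T {a})\<^sup>*\<^sup>* b z" "b \<noteq> a"
  shows "z = b \<or> (\<exists>c. T b c \<and> c \<noteq> a \<and> (avoiding T {a,b})\<^sup>*\<^sup>* c z)"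
  using assms
proof (induction rule: rtranclp_induct)
  case (step y z)
  then consider "y = b" | c where "T b c" "c \<noteq> a" "(avoiding T {a,b})\<^sup>*\<^sup>* c y" by blast
  then show ?case
  proof cases
    case 1
    then show ?thesis using step by (auto simp: avoiding_def)
  next
    case 2
    have "y \<notin> {a,b}" using avoiding_notin[OF 2(3)] 2 edge_irrefl by auto
    then have "z = b \<or> avoiding T {a,b} y z" using step by (auto simp: avoiding_def)
    then show ?thesis using 2 by (meson rtranclp.rtrancl_into_rtrancl)
  qed
qed simp

lemma tcomp_root: "T x z \<Longrightarrow> z \<in> tcomp V T x z"
  using edge_in_V edge_irrefl by (auto simp: mem_tcomp_iff)

lemma not_mem_tcomp: "x \<notin> tcomp V T x z"
  by (simp add: mem_tcomp_iff)

lemma finite_tcomp: "finite (tcomp V T x z)"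
  using finite_V by (rule rev_finite_subset) (auto simp: tcomp_def)

lemma tcomp_closed:
  assumes "a \<in> tcomp V T x z" "T a b" "b \<noteq> x"
  shows "b \<in> tcomp V T x z"
proof -
  have "avoiding T {x} a b" using assms by (auto simp: avoiding_def mem_tcomp_iff)
  with assms edge_in_V show ?thesis
    by (auto simp: mem_tcomp_iff intro: rtranclp.rtrancl_into_rtrancl)
qed

lemma tcomp_disjoint:
  assumes "T x z1" "T x z2" "z1 \<noteq> z2"
  shows "tcomp V T x z1 \<inter> tcomp V T x z2 = {}"
proof (rule ccontr)
  assume "tcomp V T x z1 \<inter> tcomp V T x z2 \<noteq> {}"
  then obtain z where z1: "(avoiding T {x})\<^sup>*\<^sup>* z1 z" and z2: "(avoiding T {x})\<^sup>*\<^sup>* z2 z"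
    by (auto simp: mem_tcomp_iff)
  have "(avoiding T {x})\<^sup>*\<^sup>* z1 z2"
    using z1 avoiding_sym[OF z2] by (rule rtranclp_trans)
  with acyclic_nbrs_not_connected_avoiding[OF symp_edge acyclic assms] show False ..
qed

lemma tcomp_root_unique: "T x z1 \<Longrightarrow> T x z2 \<Longrightarrow> z2 \<in> tcomp V T x z1 \<Longrightarrow> z1 = z2"
  using tcomp_disjoint tcomp_root by blast

lemma no_edge_between_branches:
  assumes "T x y1" "T x y2" "y1 \<noteq> y2" "a \<in> tcomp V T x y1" "b \<in> tcomp V T x y2"
  shows "\<not> T a b"
proof
  assume "T a b"
  moreover have "b \<noteq> x" using assms(5) not_mem_tcomp by blast
  ultimately have "b \<in> tcomp V T x y1" using tcomp_closed assms(4) by blast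
  with assms(5) tcomp_disjoint[OF assms(1-3)] show False by blast
qed

lemma tcomp_subset:
  assumes ab: "T a b" and bc: "T b c" and "c \<noteq> a"
  shows "tcomp V T b c \<subseteq> tcomp V T a b"
proof
  fix z assume "z \<in> tcomp V T b c"
  then have z: "z \<in> V" "z \<noteq> b" "(avoiding T {b})\<^sup>*\<^sup>* c z" by (auto simp: mem_tcomp_iff)
  have "\<not> (avoiding T {b})\<^sup>*\<^sup>* c a"
    using acyclic_nbrs_not_connected_avoiding[OF symp_edge acyclic bc edge_sym[OF ab] \<open>c \<noteq> a\<close>] .
  then have ac: "(avoiding T {a,b})\<^sup>*\<^sup>* c z"
    using avoiding_split[OF z(3) \<open>c \<noteq> a\<close>] edge_irrefl[OF bc] by auto
  have "z \<noteq> a" using avoiding_notin[OF ac] \<open>c \<noteq> a\<close> edge_irrefl[OF bc] by auto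
  have "avoiding T {a} b c" using ab bc \<open>c \<noteq> a\<close> edge_irrefl by (auto simp: avoiding_def)
  moreover have "(avoiding T {a})\<^sup>*\<^sup>* c z" using avoiding_mono[OF ac] by blast
  ultimately have "(avoiding T {a})\<^sup>*\<^sup>* b z" by (rule converse_rtranclp_into_rtranclp)
  with \<open>z \<noteq> a\<close> show "z \<in> tcomp V T a b" using z by (auto simp: mem_tcomp_iff)
qed

lemma tcomp_decompose:
  assumes ab: "T a b" and z: "z \<in> tcomp V T a b" "z \<noteq> b"
  obtains c where "T b c" "c \<noteq> a" "z \<in> tcomp V T b c"
proof -
  have "(avoiding T {a})\<^sup>*\<^sup>* b z" "z \<in> V" using z by (auto simp: mem_tcomp_iff)
  then obtain c where c: "T b c" "c \<noteq> a" "(avoiding T {a,b})\<^sup>*\<^sup>* c z"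
    using avoiding_first_step ab edge_irrefl z(2) by blast
  have "(avoiding T {b})\<^sup>*\<^sup>* c z" using avoiding_mono[OF c(3)] by auto
  with c z \<open>z \<in> V\<close> that show ?thesis by (auto simp: mem_tcomp_iff)
qed

lemma tcomp_of_leaf:
  assumes ab: "T a b" and "nbrs T b = {a}"
  shows "tcomp V T a b = {b}"
proof -
  have "z = b" if "(avoiding T {a})\<^sup>*\<^sup>* b z" for z
    using that assms(2) by (induction rule: rtranclp_induct) (auto simp: avoiding_def nbrs_def)
  then show ?thesis using tcomp_root[OF ab] by (auto simp: mem_tcomp_iff)
qed

end

section \<open>Rotation systems and face walks\<close>

locale embedded_tree = tree_graph +
  fixes rot :: "'a \<Rightarrow> 'a \<Rightarrow> 'a"
  assumes rotation_system: "rotation_system V T rot"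
    and max_deg_ge_3: "3 \<le> max_deg V T"
begin

lemma exists_deg_ge_3: "\<exists>w\<in>V. 3 \<le> card (nbrs T w)"
proof -
  have "max_deg V T \<in> deg T ` V"
    unfolding max_deg_def using finite_V V_nonempty by simp
  with max_deg_ge_3 show ?thesis by (auto simp: deg_def)
qed

lemma leaf_nbr_not_leaf:
  assumes l: "l \<in> leaves V T" and lq: "T l q"
  shows "q \<notin> leaves V T"
proof
  assume q: "q \<in> leaves V T"
  have nbrs_lq: "nbrs T l = {q}" "nbrs T q = {l}"
    using leaf_nbrs[OF l lq] leaf_nbrs[OF q edge_sym[OF lq]] .
  have "z \<in> {l, q}" if "T\<^sup>*\<^sup>* l z" for z
    using that by (induction rule: rtranclp_induct) (use nbrs_lq in \<open>auto simp: nbrs_def\<close>)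
  then have "V \<subseteq> {l, q}" using connected edge_in_V[OF lq] by blast
  have card_le_2: "card (nbrs T w) \<le> 2" for w
  proof -
    have "nbrs T w \<subseteq> {l, q}" using \<open>V \<subseteq> {l, q}\<close> edge_in_V by (auto simp: nbrs_def)
    then have "card (nbrs T w) \<le> card {l, q}" by (simp add: card_mono)
    also have "\<dots> \<le> 2" by (simp add: card_insert_if)
    finally show ?thesis .
  qed
  obtain w where "3 \<le> card (nbrs T w)" using exists_deg_ge_3 by blast
  with card_le_2[of w] show False by linarith
qed

lemma rot_edge: "T b a \<Longrightarrow> T b (rot b a)"
  using rotation_system edge_in_V
  by (auto simp: rotation_system_def mem_nbrs_iff[symmetric] dest: bij_betw_apply)

lemma rot_inj: "T b a \<Longrightarrow> T b a' \<Longrightarrow> rot b a = rot b a' \<Longrightarrow> a = a'"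
  using rotation_system edge_in_V
  by (auto simp: rotation_system_def mem_nbrs_iff[symmetric] dest: bij_betw_imp_inj_on inj_onD)

lemma rot_orbit: "T b a \<Longrightarrow> T b w \<Longrightarrow> \<exists>k. (rot b ^^ k) a = w"
  using rotation_system edge_in_V by (auto simp: rotation_system_def mem_nbrs_iff)

lemma funpow_rot_edge: "T b a \<Longrightarrow> T b ((rot b ^^ k) a)"
  by (induction k) (auto intro: rot_edge)

lemma card_nbrs_le_orbit:
  assumes "T b a" "\<And>k. (rot b ^^ k) a \<in> S" "finite S"
  shows "card (nbrs T b) \<le> card S"
proof -
  have "nbrs T b \<subseteq> S"
  proof
    fix w assume "w \<in> nbrs T b"
    then obtain k where "(rot b ^^ k) a = w" using rot_orbit[OF assms(1)] by (auto simp: mem_nbrs_iff)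
    with assms(2) show "w \<in> S" by blast
  qed
  with assms(3) show ?thesis by (rule card_mono)
qed

lemma rot_neq:
  assumes ba: "T b a" and "2 \<le> card (nbrs T b)"
  shows "rot b a \<noteq> a"
proof
  assume "rot b a = a"
  then have "(rot b ^^ k) a \<in> {a}" for k by (induction k) auto
  then have "card (nbrs T b) \<le> 1" using card_nbrs_le_orbit[OF ba] by fastforce
  with assms(2) show False by simp
qed

lemma rot_rot_neq:
  assumes ba: "T b a" and "3 \<le> card (nbrs T b)"
  shows "rot b (rot b a) \<noteq> a"
proof
  assume "rot b (rot b a) = a"
  then have "(rot b ^^ k) a \<in> {a, rot b a}" for k by (induction k) auto
  then have "card (nbrs T b) \<le> card {a, rot b a}" using card_nbrs_le_orbit[OF ba] by blast
  also have "\<dots> \<le> 2" by (simp add: card_insert_if)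
  finally show False using assms(2) by simp
qed

lemma rot_period:
  assumes ba: "T b a" and "2 \<le> card (nbrs T b)"
  obtains d where "2 \<le> d" "(rot b ^^ d) a = a" "\<And>t. 0 < t \<Longrightarrow> t < d \<Longrightarrow> (rot b ^^ t) a \<noteq> a"
    "\<And>w. T b w \<Longrightarrow> w \<noteq> a \<Longrightarrow> \<exists>t. 0 < t \<and> t < d \<and> (rot b ^^ t) a = w"
proof -
  obtain k where "(rot b ^^ k) (rot b a) = a"
    using rot_orbit[OF rot_edge[OF ba] ba] by blast
  then have "(rot b ^^ Suc k) a = a" by (simp only: funpow_Suc_right comp_def)
  define d where "d = (LEAST t. 0 < t \<and> (rot b ^^ t) a = a)"
  have d: "0 < d" "(rot b ^^ d) a = a"
    using LeastI[of "\<lambda>t. 0 < t \<and> (rot b ^^ t) a = a", OF conjI[OF _ \<open>(rot b ^^ Suc k) a = a\<close>]]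
    by (simp_all add: d_def)
  have d_min: "(rot b ^^ t) a \<noteq> a" if "0 < t" "t < d" for t
    using not_less_Least[of t "\<lambda>t. 0 < t \<and> (rot b ^^ t) a = a"] that by (auto simp: d_def)
  have "2 \<le> d" using d rot_neq[OF assms] by (cases "d = 1") auto
  moreover have "\<exists>t. 0 < t \<and> t < d \<and> (rot b ^^ t) a = w" if "T b w" "w \<noteq> a" for w
  proof -
    obtain k where "(rot b ^^ k) a = w" using rot_orbit[OF ba \<open>T b w\<close>] by blast
    then have "(rot b ^^ (k mod d)) a = w" using funpow_mod_eq[OF d(2)] by simp
    moreover have "0 < k mod d" using calculation \<open>w \<noteq> a\<close> by (cases "k mod d") auto
    ultimately show ?thesis using d(1) by (intro exI[of _ "k mod d"]) simp
  qed
  ultimately show ?thesis using that d d_min by blast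
qed

abbreviation face_step :: "'a \<times> 'a \<Rightarrow> 'a \<times> 'a" where
  "face_step \<equiv> face_next rot"

lemma face_step_simp: "face_step (a, b) = (b, rot b a)"
  by (simp add: face_next_def)

definition dart :: "'a \<times> 'a \<Rightarrow> bool" where
  "dart d \<longleftrightarrow> T (fst d) (snd d)"

lemma dart_face_step: "dart d \<Longrightarrow> dart (face_step d)"
  by (cases d) (simp add: dart_def face_step_simp rot_edge edge_sym)

lemma dart_funpow_face_step: "dart d \<Longrightarrow> dart ((face_step ^^ k) d)"
  by (induction k) (auto intro: dart_face_step)

lemma face_step_inj: "dart d1 \<Longrightarrow> dart d2 \<Longrightarrow> face_step d1 = face_step d2 \<Longrightarrow> d1 = d2"
  by (cases d1; cases d2) (auto simp: dart_def face_step_simp intro: rot_inj[OF edge_sym edge_sym])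

lemma funpow_face_step_inj:
  "dart d1 \<Longrightarrow> dart d2 \<Longrightarrow> (face_step ^^ k) d1 = (face_step ^^ k) d2 \<Longrightarrow> d1 = d2"
proof (induction k arbitrary: d1 d2)
  case (Suc k)
  then have "(face_step ^^ k) d1 = (face_step ^^ k) d2"
    using face_step_inj dart_funpow_face_step by simp
  with Suc show ?case by blast
qed simp

lemma fst_funpow_Suc_face_step: "fst ((face_step ^^ Suc n) d) = snd ((face_step ^^ n) d)"
  by (cases "(face_step ^^ n) d") (simp add: face_step_simp)

lemma rot_leaf:
  assumes "l \<in> leaves V T" "T l q"
  shows "rot l q = q"
proof -
  have "rot l q \<in> nbrs T l" using rot_edge[OF assms(2)] by (simp add: mem_nbrs_iff)
  with leaf_nbrs[OF assms] show ?thesis by simp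
qed

definition face_walk_vertices :: "'a \<times> 'a \<Rightarrow> nat \<Rightarrow> 'a set" where
  "face_walk_vertices d K = (\<lambda>j. snd ((face_step ^^ j) d)) ` {..K}"

lemma face_walk_vertices_shift:
  "face_walk_vertices ((face_step ^^ B) d) K = (\<lambda>j. snd ((face_step ^^ j) d)) ` {B..B + K}"
proof -
  have "{B..B + K} = (\<lambda>j. j + B) ` {..K}"
    by (simp add: atMost_atLeast0 add.commute)
  then show ?thesis by (simp add: face_walk_vertices_def image_image funpow_add)
qed

lemma face_walk_vertices_add:
  "face_walk_vertices d (m + n) = face_walk_vertices d m \<union> face_walk_vertices ((face_step ^^ m) d) n"
proof -
  have "{..m + n} = {..m} \<union> {m..m + n}" by auto
  then show ?thesis unfolding face_walk_vertices_shift by (simp add: face_walk_vertices_def image_Un)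
qed

lemma face_walk_vertices_0: "face_walk_vertices d 0 = {snd d}"
  by (simp add: face_walk_vertices_def)

lemma face_walk_vertices_Suc:
  "face_walk_vertices d (Suc n) = insert (snd ((face_step ^^ Suc n) d)) (face_walk_vertices d n)"
  by (simp add: face_walk_vertices_def atMost_Suc)

definition branch_tour :: "'a \<Rightarrow> 'a \<Rightarrow> nat \<Rightarrow> bool" where
  "branch_tour a b K \<longleftrightarrow> (face_step ^^ K) (a, b) = (b, a)
     \<and> face_walk_vertices (a, b) K \<subseteq> tcomp V T a b \<union> {a}
     \<and> tcomp V T a b \<inter> leaves V T \<subseteq> face_walk_vertices (a, b) K
     \<and> face_walk_vertices (a, b) K \<inter> leaves V T \<noteq> {}"

lemma branch_tour_leaf:
  assumes ab: "T a b" and "nbrs T b = {a}"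
  shows "branch_tour a b 1"
proof -
  have b: "b \<in> leaves V T" using assms(2) edge_in_V[OF ab] by (simp add: leaves_def deg_def)
  have step: "face_step (a, b) = (b, a)"
    using rot_leaf[OF b edge_sym[OF ab]] by (simp add: face_step_simp)
  then have "face_walk_vertices (a, b) 1 = {a, b}"
    by (simp add: face_walk_vertices_Suc face_walk_vertices_0)
  with b step tcomp_of_leaf[OF assms] show ?thesis by (auto simp: branch_tour_def)
qed

lemma funpow_face_step_add: "(face_step ^^ (m + n)) d = (face_step ^^ n) ((face_step ^^ m) d)"
  by (simp only: add.commute[of m] funpow_add comp_apply)

lemma branch_tour_then_rot:
  assumes "(face_step ^^ K) d = (b, c)" "branch_tour b c K'"
  shows "(face_step ^^ (K + Suc K')) d = (b, rot b c)"
    and "face_walk_vertices d (K + Suc K') =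
      face_walk_vertices d K \<union> face_walk_vertices (b, c) K' \<union> {rot b c}"
proof -
  have tour: "(face_step ^^ K') (b, c) = (c, b)" using assms(2) by (simp add: branch_tour_def)
  then show "(face_step ^^ (K + Suc K')) d = (b, rot b c)"
    using assms(1) by (simp add: funpow_face_step_add face_step_simp)
  have "face_walk_vertices (b, c) (Suc K') = face_walk_vertices (b, c) K' \<union> {rot b c}"
    using tour by (simp add: face_walk_vertices_Suc face_step_simp)
  then show "face_walk_vertices d (K + Suc K') =
      face_walk_vertices d K \<union> face_walk_vertices (b, c) K' \<union> {rot b c}"
    using assms(1) face_walk_vertices_add[of d K "Suc K'"] by simp
qed

definition tour_prefix :: "'a \<Rightarrow> 'a \<Rightarrow> nat \<Rightarrow> nat \<Rightarrow> bool" where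
  "tour_prefix a b t K \<longleftrightarrow> (face_step ^^ K) (a, b) = (b, (rot b ^^ t) a)
     \<and> face_walk_vertices (a, b) K \<subseteq> tcomp V T a b \<union> {a}
     \<and> (\<Union>s\<in>{1..<t}. tcomp V T b ((rot b ^^ s) a)) \<inter> leaves V T \<subseteq> face_walk_vertices (a, b) K
     \<and> (1 < t \<longrightarrow> face_walk_vertices (a, b) K \<inter> leaves V T \<noteq> {})"

lemma tour_prefix_1:
  assumes ab: "T a b" and "rot b a \<noteq> a"
  shows "tour_prefix a b 1 1"
proof -
  have "rot b a \<in> tcomp V T a b"
    using tcomp_closed[OF tcomp_root[OF ab] rot_edge[OF edge_sym[OF ab]] assms(2)] .
  then show ?thesis
    using tcomp_root[OF ab]
    by (simp add: tour_prefix_def face_step_simp face_walk_vertices_Suc face_walk_vertices_0)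
qed

lemma tour_prefix_Suc:
  assumes ab: "T a b" and prefix: "tour_prefix a b t K" and "1 \<le> t"
    and c: "(rot b ^^ t) a \<noteq> a" and tour: "branch_tour b ((rot b ^^ t) a) K'"
  shows "tour_prefix a b (Suc t) (K + Suc K')"
proof -
  define c where "c = (rot b ^^ t) a"
  have bc: "T b c" unfolding c_def using funpow_rot_edge edge_sym[OF ab] .
  have at: "(face_step ^^ K) (a, b) = (b, c)" using prefix by (simp add: tour_prefix_def c_def)
  note walk = branch_tour_then_rot[OF at tour[folded c_def]]
  have "face_walk_vertices (b, c) K' \<subseteq> tcomp V T a b"
    using tour tcomp_subset[OF ab bc c[folded c_def]] tcomp_root[OF ab]
    by (auto simp: branch_tour_def c_def)
  moreover have "rot b c \<in> tcomp V T a b \<union> {a}"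
    using tcomp_closed[OF tcomp_root[OF ab] rot_edge[OF bc]] by blast
  moreover have "{1..<Suc t} = insert t {1..<t}" using \<open>1 \<le> t\<close> by auto
  ultimately show ?thesis
    using prefix tour walk by (auto simp: tour_prefix_def branch_tour_def c_def)
qed

lemma branch_tour_of_subtours:
  assumes ab: "T a b" and not_leaf: "nbrs T b \<noteq> {a}"
    and subtours: "\<And>c. T b c \<Longrightarrow> c \<noteq> a \<Longrightarrow> \<exists>K. branch_tour b c K"
  shows "\<exists>K. branch_tour a b K"
proof -
  obtain w where w: "T b w" "w \<noteq> a" using not_leaf edge_sym[OF ab] by (auto simp: nbrs_def)
  then have "card {a, w} \<le> card (nbrs T b)"
    using ab finite_nbrs by (intro card_mono) (auto simp: mem_nbrs_iff edge_sym)
  then have deg_b: "2 \<le> card (nbrs T b)" using w(2) by simp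
  obtain d where d: "2 \<le> d" "(rot b ^^ d) a = a"
      "\<And>t. 0 < t \<Longrightarrow> t < d \<Longrightarrow> (rot b ^^ t) a \<noteq> a"
      "\<And>w. T b w \<Longrightarrow> w \<noteq> a \<Longrightarrow> \<exists>t. 0 < t \<and> t < d \<and> (rot b ^^ t) a = w"
    using rot_period[OF edge_sym[OF ab] deg_b] by blast
  \<comment> \<open>the walk winds once around b, touring the branches at its other neighbours in turn\<close>
  have prefixes: "\<exists>K. tour_prefix a b t K" if "1 \<le> t" "t \<le> d" for t
    using that
  proof (induction t)
    case (Suc t)
    show ?case
    proof (cases "t = 0")
      case True
      then show ?thesis using tour_prefix_1[OF ab] d(1) d(3)[of 1] by auto
    next
      case False
      then obtain K where prefix: "tour_prefix a b t K" using Suc by auto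
      have "(rot b ^^ t) a \<noteq> a" using d(3) False Suc.prems by simp
      moreover obtain K' where "branch_tour b ((rot b ^^ t) a) K'"
        using subtours[OF funpow_rot_edge[OF edge_sym[OF ab]] calculation] ..
      ultimately show ?thesis using tour_prefix_Suc[OF ab prefix] False by auto
    qed
  qed simp
  have "\<exists>K. tour_prefix a b d K" using d(1) by (intro prefixes) simp_all
  then obtain K where K: "tour_prefix a b d K" ..
  have "b \<notin> leaves V T" using deg_b by (simp add: leaves_def deg_def)
  have "tcomp V T a b \<inter> leaves V T \<subseteq> (\<Union>s\<in>{1..<d}. tcomp V T b ((rot b ^^ s) a))"
  proof
    fix l assume l: "l \<in> tcomp V T a b \<inter> leaves V T"
    then have "l \<noteq> b" using \<open>b \<notin> leaves V T\<close> by blast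
    then obtain w where w: "T b w" "w \<noteq> a" "l \<in> tcomp V T b w"
      using tcomp_decompose[OF ab] l by blast
    then obtain s where "0 < s" "s < d" "(rot b ^^ s) a = w" using d(4) by blast
    with w show "l \<in> (\<Union>s\<in>{1..<d}. tcomp V T b ((rot b ^^ s) a))" by force
  qed
  with K d(1,2) have "branch_tour a b K" unfolding tour_prefix_def branch_tour_def by auto
  then show ?thesis ..
qed

lemma branch_tour_exists: "T a b \<Longrightarrow> \<exists>K. branch_tour a b K"
proof (induction "card (tcomp V T a b)" arbitrary: a b rule: less_induct)
  case less
  show ?case
  proof (cases "nbrs T b = {a}")
    case True
    then show ?thesis using branch_tour_leaf less.prems by blast
  next
    case False
    show ?thesis
    proof (rule branch_tour_of_subtours[OF less.prems False])
      fix c assume bc: "T b c" "c \<noteq> a"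
      have "tcomp V T b c \<subset> tcomp V T a b"
        using tcomp_subset[OF less.prems bc] tcomp_root[OF less.prems] not_mem_tcomp by blast
      then have "card (tcomp V T b c) < card (tcomp V T a b)"
        using finite_tcomp by (rule psubset_card_mono[rotated])
      then show "\<exists>K. branch_tour b c K" using less.hyps bc(1) by blast
    qed
  qed
qed

lemma branch_tour_then_next_branch:
  "branch_tour a b K \<Longrightarrow> (face_step ^^ Suc K) (a, b) = (a, rot a b)"
  by (simp add: branch_tour_def face_step_simp)

lemma branch_has_leaf:
  assumes "T x z" "x \<notin> leaves V T"
  shows "tcomp V T x z \<inter> leaves V T \<noteq> {}"
proof -
  obtain K where "branch_tour x z K" using branch_tour_exists[OF assms(1)] ..
  with assms(2) show ?thesis by (auto simp: branch_tour_def)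
qed

section \<open>The cyclic order of the leaves\<close>

lemma cyc_adjE:
  assumes "cyc_adj V T rot l l'"
  obtains p k where "l \<in> leaves V T" "l' \<in> leaves V T" "T l p" "0 < k"
    "snd ((face_step ^^ k) (l, p)) = l'"
    "\<And>j. 0 < j \<Longrightarrow> j < k \<Longrightarrow> snd ((face_step ^^ j) (l, p)) \<notin> leaves V T"
  using assms unfolding cyc_adj_def by blast

lemma cyc_adj_succ_unique:
  assumes "cyc_adj V T rot l a" "cyc_adj V T rot l b"
  shows "a = b"
proof -
  obtain p k where a: "l \<in> leaves V T" "T l p" "0 < k" "snd ((face_step ^^ k) (l, p)) = a"
      "\<And>j. 0 < j \<Longrightarrow> j < k \<Longrightarrow> snd ((face_step ^^ j) (l, p)) \<notin> leaves V T" "a \<in> leaves V T"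
    using assms(1) by (rule cyc_adjE) blast
  obtain p' k' where b: "T l p'" "0 < k'" "snd ((face_step ^^ k') (l, p')) = b"
      "\<And>j. 0 < j \<Longrightarrow> j < k' \<Longrightarrow> snd ((face_step ^^ j) (l, p')) \<notin> leaves V T" "b \<in> leaves V T"
    using assms(2) by (rule cyc_adjE) blast
  have "p' = p" using leaf_nbrs[OF a(1,2)] b(1) by (auto simp: mem_nbrs_iff[symmetric])
  \<comment> \<open>both walks start at the only dart leaving l, so both stop at its first leaf\<close>
  have "k = k'"
    using a(3-6) b(2-5) \<open>p' = p\<close> by (metis linorder_neqE_nat)
  with a(4) b(3) \<open>p' = p\<close> show ?thesis by simp
qed

lemma leaf_walks_to_same_leaf:
  assumes a: "T a pa" "snd ((face_step ^^ ka) (a, pa)) = l" "a \<in> leaves V T"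
    and b: "T b pb" "snd ((face_step ^^ kb) (b, pb)) = l" "b \<in> leaves V T"
      "\<And>j. 0 < j \<Longrightarrow> j < kb \<Longrightarrow> snd ((face_step ^^ j) (b, pb)) \<notin> leaves V T"
    and l: "l \<in> leaves V T" and "ka \<le> kb"
  shows "a = b"
proof -
  have darts: "dart ((face_step ^^ k) (a, pa))" "dart ((face_step ^^ k) (b, pb))" for k
    using dart_funpow_face_step a(1) b(1) by (auto simp: dart_def)
  \<comment> \<open>both walks arrive at l through the only dart entering l\<close>
  obtain q where "nbrs T l = {q}"
    using darts(1)[of ka] a(2) leaf_nbrs[OF l] edge_sym by (force simp: dart_def)
  then have "fst ((face_step ^^ ka) (a, pa)) = q" "fst ((face_step ^^ kb) (b, pb)) = q"
    using darts[of ka] darts[of kb] a(2) b(2) edge_sym by (auto simp: dart_def mem_nbrs_iff[symmetric])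
  then have "(face_step ^^ ka) (a, pa) = (face_step ^^ ka) ((face_step ^^ (kb - ka)) (b, pb))"
    using a(2) b(2) \<open>ka \<le> kb\<close> funpow_face_step_add[of "kb - ka" ka "(b, pb)"]
    by (simp add: prod_eq_iff)
  then have walk_back: "(face_step ^^ (kb - ka)) (b, pb) = (a, pa)"
    using funpow_face_step_inj darts[of 0] darts[of "kb - ka"] by (metis funpow_0)
  show ?thesis
  proof (cases "kb - ka")
    case 0
    then show ?thesis using walk_back by simp
  next
    case (Suc m)
    then have "snd ((face_step ^^ m) (b, pb)) = a"
      using walk_back fst_funpow_Suc_face_step[of m "(b, pb)"] by simp
    moreover have "snd ((face_step ^^ m) (b, pb)) \<notin> leaves V T"
    proof (cases m)
      case 0
      then show ?thesis using leaf_nbr_not_leaf[OF b(3,1)] by simp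
    next
      case (Suc m')
      then show ?thesis using \<open>kb - ka = Suc m\<close> by (intro b(4)) auto
    qed
    ultimately show ?thesis using a(3) by simp
  qed
qed

lemma cyc_adj_pred_unique:
  assumes "cyc_adj V T rot a l" "cyc_adj V T rot b l"
  shows "a = b"
proof -
  obtain pa ka where a: "a \<in> leaves V T" "l \<in> leaves V T" "T a pa" "snd ((face_step ^^ ka) (a, pa)) = l"
      "\<And>j. 0 < j \<Longrightarrow> j < ka \<Longrightarrow> snd ((face_step ^^ j) (a, pa)) \<notin> leaves V T"
    using assms(1) by (rule cyc_adjE) blast
  obtain pb kb where b: "b \<in> leaves V T" "T b pb" "snd ((face_step ^^ kb) (b, pb)) = l"
      "\<And>j. 0 < j \<Longrightarrow> j < kb \<Longrightarrow> snd ((face_step ^^ j) (b, pb)) \<notin> leaves V T"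
    using assms(2) by (rule cyc_adjE) blast
  show ?thesis
  proof (cases "ka \<le> kb")
    case True
    show ?thesis by (rule leaf_walks_to_same_leaf[OF a(3,4,1) b(2,3,1,4) a(2) True])
  next
    case False
    then have "kb \<le> ka" by simp
    have "b = a" by (rule leaf_walks_to_same_leaf[OF b(2,3,1) a(3,4,1,5) a(2) \<open>kb \<le> ka\<close>])
    then show ?thesis by simp
  qed
qed

definition leaf_steps :: "'a \<times> 'a \<Rightarrow> nat set" where
  "leaf_steps d = {j. snd ((face_step ^^ j) d) \<in> leaves V T}"

lemma cyc_adj_consecutive_leaf_steps:
  assumes d: "dart d" and st: "s \<in> leaf_steps d" "t \<in> leaf_steps d" "s < t"
    and between: "{s<..<t} \<inter> leaf_steps d = {}"
  shows "cyc_adj V T rot (snd ((face_step ^^ s) d)) (snd ((face_step ^^ t) d))"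
proof -
  obtain q l where s_dart: "(face_step ^^ s) d = (q, l)" by fastforce
  then have l: "l \<in> leaves V T" "T l q"
    using st(1) dart_funpow_face_step[OF d, of s] edge_sym by (auto simp: leaf_steps_def dart_def)
  \<comment> \<open>a leaf turns the walk back along its only edge\<close>
  have walk_back: "(face_step ^^ Suc s) d = (l, q)"
    using s_dart rot_leaf[OF l] by (simp add: face_step_simp)
  then have "Suc s \<noteq> t" using st(2) leaf_nbr_not_leaf[OF l] by (auto simp: leaf_steps_def)
  have shift: "(face_step ^^ j) (l, q) = (face_step ^^ (Suc s + j)) d" for j
    using walk_back funpow_face_step_add[of "Suc s" j d] by simp
  show ?thesis
    unfolding cyc_adj_def s_dart snd_conv
  proof (intro conjI exI)
    show "l \<in> leaves V T" "T l q" by (fact l)+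
    show "snd ((face_step ^^ t) d) \<in> leaves V T" using st(2) by (simp add: leaf_steps_def)
    show "0 < t - Suc s" using st(3) \<open>Suc s \<noteq> t\<close> by simp
    have "Suc s + (t - Suc s) = t" using st(3) by simp
    then show "snd ((face_step ^^ (t - Suc s)) (l, q)) = snd ((face_step ^^ t) d)"
      by (simp only: shift)
    show "\<forall>j. 0 < j \<and> j < t - Suc s \<longrightarrow> snd ((face_step ^^ j) (l, q)) \<notin> leaves V T"
    proof (intro allI impI)
      fix j assume "0 < j \<and> j < t - Suc s"
      then have "Suc s + j \<in> {s<..<t}" by auto
      then have "Suc s + j \<notin> leaf_steps d" using between by blast
      then show "snd ((face_step ^^ j) (l, q)) \<notin> leaves V T"
        unfolding shift leaf_steps_def by simp
    qed
  qed
qed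

section \<open>Boundary edges between two leafy branches\<close>

abbreviation H :: "'a \<Rightarrow> 'a \<Rightarrow> bool" where
  "H \<equiv> halin_adj V T rot"

lemma halin_adj_sym: "H a b \<Longrightarrow> H b a"
  unfolding halin_adj_def using edge_sym by blast

lemma halin_adj_in_V: "H a b \<Longrightarrow> a \<in> V \<and> b \<in> V"
  unfolding halin_adj_def cyc_adj_def using edge_in_V by (auto simp: leaves_def)

lemma halin_nbrs_leaf:
  assumes "l \<in> leaves V T" "T l p" "cyc_adj V T rot l s" "cyc_adj V T rot q l"
  shows "nbrs H l = {p, s, q}"
proof -
  have "T l a \<longleftrightarrow> a = p" for a
    using leaf_nbrs[OF assms(1,2)] mem_nbrs_iff[of a l] by simp
  moreover have "cyc_adj V T rot l a \<longleftrightarrow> a = s" for a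
    using cyc_adj_succ_unique[OF assms(3)] assms(3) by blast
  moreover have "cyc_adj V T rot a l \<longleftrightarrow> a = q" for a
    using cyc_adj_pred_unique[OF _ assms(4)] assms(4) by blast
  ultimately show ?thesis by (auto simp: nbrs_def halin_adj_def)
qed

lemma nbr_of_leaf_in_leafy_branch:
  assumes xz: "T x z" and leafy: "2 \<le> card (tcomp V T x z \<inter> leaves V T)"
    and l: "l \<in> tcomp V T x z" "l \<in> leaves V T" and lp: "T l p"
  shows "p \<in> tcomp V T x z" "p \<notin> leaves V T"
proof -
  have "p \<noteq> x"
  proof
    assume "p = x"
    then have "l = z" using tcomp_root_unique[OF xz _ l(1)] edge_sym[OF lp] by simp
    then have "tcomp V T x z = {z}"
      using tcomp_of_leaf[OF xz] leaf_nbrs[OF l(2) lp] \<open>p = x\<close> by simp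
    then have "card (tcomp V T x z \<inter> leaves V T) \<le> 1" by (simp add: card_le_Suc0_iff_eq)
    with leafy show False by simp
  qed
  then show "p \<in> tcomp V T x z" using tcomp_closed[OF l(1) lp] by blast
  show "p \<notin> leaves V T" using leaf_nbr_not_leaf[OF l(2) lp] .
qed

lemma halin_nbrs_leaf_of_leafy_branch:
  assumes xz: "T x z" and leafy: "2 \<le> card (tcomp V T x z \<inter> leaves V T)"
    and l: "l \<in> tcomp V T x z" and ls: "cyc_adj V T rot l s" and ql: "cyc_adj V T rot q l"
  obtains p where "nbrs H l = {p, s, q}" "T l p" "p \<in> tcomp V T x z" "p \<notin> leaves V T"
proof -
  have "l \<in> leaves V T" using ls by (simp add: cyc_adj_def)
  then obtain p where "T l p" by (rule leaf_has_nbr)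
  with \<open>l \<in> leaves V T\<close> show ?thesis
    using that halin_nbrs_leaf[OF _ _ ls ql] nbr_of_leaf_in_leafy_branch[OF xz leafy l] by blast
qed

lemma tree_like_edge_between_branches:
  assumes branches: "T x y1" "T x y2" "y1 \<noteq> y2"
    and leafy: "2 \<le> card (tcomp V T x y1 \<inter> leaves V T)" "2 \<le> card (tcomp V T x y2 \<inter> leaves V T)"
    and chain: "cyc_adj V T rot u' u" "cyc_adj V T rot u v" "cyc_adj V T rot v v'"
      "cyc_adj V T rot v' w"
    and in_A1: "u' \<in> tcomp V T x y1" "u \<in> tcomp V T x y1" "w \<notin> tcomp V T x y1"
    and in_A2: "v \<in> tcomp V T x y2" "v' \<in> tcomp V T x y2"
  shows "tree_like_edge V H u v"
proof -
  obtain pu where pu: "nbrs H u = {pu, v, u'}" "T u pu" "pu \<in> tcomp V T x y1" "pu \<notin> leaves V T"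
    by (rule halin_nbrs_leaf_of_leafy_branch[OF branches(1) leafy(1) in_A1(2) chain(2,1)])
  obtain pv where pv: "nbrs H v = {pv, v', u}" "T v pv" "pv \<in> tcomp V T x y2" "pv \<notin> leaves V T"
    by (rule halin_nbrs_leaf_of_leafy_branch[OF branches(2) leafy(2) in_A2(1) chain(3,2)])
  have disj: "tcomp V T x y1 \<inter> tcomp V T x y2 = {}" by (rule tcomp_disjoint[OF branches])
  have leaf: "u' \<in> leaves V T" "v' \<in> leaves V T" using chain by (auto simp: cyc_adj_def)
  have "u' \<noteq> u" "u \<noteq> v" "v \<noteq> v'"
    using cyc_adj_succ_unique[OF chain(2)] cyc_adj_pred_unique[OF chain(2)] chain(1,3) disj
      in_A1 in_A2 by auto
  have adj_iff: "H a b \<longleftrightarrow> b \<in> nbrs H a" for a b by (simp add: nbrs_def)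
  show ?thesis
  proof unfold_locales
    show "finite V" by (rule finite_V)
    show "H a b \<Longrightarrow> H b a" for a b by (rule halin_adj_sym)
    show "H a b \<Longrightarrow> a \<in> V \<and> b \<in> V" for a b by (rule halin_adj_in_V)
    show "H u v" using chain(2) by (simp add: halin_adj_def)
    show "\<not> H u u" "\<not> H v v"
      using pu pv adj_iff edge_irrefl \<open>u' \<noteq> u\<close> \<open>u \<noteq> v\<close> \<open>v \<noteq> v'\<close> by auto
    have "pu \<noteq> v" "pu \<noteq> u'" "v \<noteq> u'" "pv \<noteq> v'" "pv \<noteq> u" "v' \<noteq> u"
      using pu pv in_A1 in_A2 disj leaf by auto
    then show "3 \<le> deg H u" "3 \<le> deg H v" by (simp_all add: deg_def pu(1) pv(1))
  next
    fix a assume "H u a" "a \<noteq> v"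
    then have "a \<in> {pu, u'}" using pu(1) adj_iff by auto
    then show "\<not> H v a"
      using pv(1,3) adj_iff pu(3) in_A1 in_A2 disj \<open>u' \<noteq> u\<close> edge_irrefl[OF pu(2)] by auto
  next
    fix a b assume "H u a" "a \<noteq> v" "H v b" "b \<noteq> u"
    then have a: "a \<in> {pu, u'}" and b: "b \<in> {pv, v'}" using pu(1) pv(1) adj_iff by auto
    have "\<not> T a b"
      using no_edge_between_branches[OF branches] a b pu(3) pv(3) in_A1 in_A2 by blast
    moreover have "\<not> cyc_adj V T rot a b"
    proof
      assume ab: "cyc_adj V T rot a b"
      then have "a = u'" using a pu(4) by (auto simp: cyc_adj_def)
      then show False using cyc_adj_succ_unique[OF ab] chain(1) b pv(3) in_A1 in_A2 disj by auto
    qed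
    moreover have "\<not> cyc_adj V T rot b a"
    proof
      assume ba: "cyc_adj V T rot b a"
      then have "b = v'" using b pv(4) by (auto simp: cyc_adj_def)
      then show False using cyc_adj_succ_unique[OF ba] chain(4) a pu(3) in_A1 by auto
    qed
    ultimately show "\<not> H a b" by (simp add: halin_adj_def)
  qed
qed

lemma leaf_steps_of_branch_tour:
  assumes at: "(face_step ^^ B) d = (a, b)" and tour: "branch_tour a b K"
    and a: "a \<notin> leaves V T"
  shows "\<And>j. j \<in> {B..B + K} \<inter> leaf_steps d \<Longrightarrow> snd ((face_step ^^ j) d) \<in> tcomp V T a b"
    and "card (tcomp V T a b \<inter> leaves V T) \<le> card ({B..B + K} \<inter> leaf_steps d)"
proof -
  have walk: "(\<lambda>j. snd ((face_step ^^ j) d)) ` {B..B + K} = face_walk_vertices (a, b) K"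
    using face_walk_vertices_shift[of B d K] at by simp
  show "snd ((face_step ^^ j) d) \<in> tcomp V T a b" if "j \<in> {B..B + K} \<inter> leaf_steps d" for j
    using that walk tour a by (auto simp: branch_tour_def leaf_steps_def)
  have "tcomp V T a b \<inter> leaves V T \<subseteq> (\<lambda>j. snd ((face_step ^^ j) d)) ` ({B..B + K} \<inter> leaf_steps d)"
    using tour walk[symmetric] by (auto simp: branch_tour_def leaf_steps_def)
  then show "card (tcomp V T a b \<inter> leaves V T) \<le> card ({B..B + K} \<inter> leaf_steps d)"
    by (intro surj_card_le) auto
qed

lemma leaf_chain_across_branches:
  assumes deg_x: "3 \<le> card (nbrs T x)" and xy: "T x y"
    and leafy: "2 \<le> card (tcomp V T x y \<inter> leaves V T)"
      "2 \<le> card (tcomp V T x (rot x y) \<inter> leaves V T)"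
  obtains u' u v v' w where
    "cyc_adj V T rot u' u" "cyc_adj V T rot u v" "cyc_adj V T rot v v'" "cyc_adj V T rot v' w"
    "u' \<in> tcomp V T x y" "u \<in> tcomp V T x y" "w \<notin> tcomp V T x y"
    "v \<in> tcomp V T x (rot x y)" "v' \<in> tcomp V T x (rot x y)"
proof -
  define y' where "y' = rot x y"
  define y'' where "y'' = rot x y'"
  have xy': "T x y'" unfolding y'_def by (rule rot_edge[OF xy])
  have xy'': "T x y''" unfolding y''_def by (rule rot_edge[OF xy'])
  have "y \<noteq> y'" "y \<noteq> y''"
    using rot_neq[OF xy] rot_rot_neq[OF xy deg_x] deg_x by (auto simp: y'_def y''_def)
  then have disj: "tcomp V T x y \<inter> tcomp V T x y' = {}" "tcomp V T x y \<inter> tcomp V T x y'' = {}"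
    using tcomp_disjoint xy xy' xy'' by auto
  have x: "x \<notin> leaves V T" using deg_x by (simp add: leaves_def deg_def)
  \<comment> \<open>the face walk from (x, y) tours the branches at y, y' and y'' one after the other\<close>
  define d where "d = (x, y)"
  obtain K1 K2 K3 where tours: "branch_tour x y K1" "branch_tour x y' K2" "branch_tour x y'' K3"
    using branch_tour_exists xy xy' xy'' by meson
  have at2: "(face_step ^^ Suc K1) d = (x, y')"
    using branch_tour_then_next_branch[OF tours(1)] by (simp add: d_def y'_def)
  have at3: "(face_step ^^ Suc (Suc K1 + K2)) d = (x, y'')"
    using branch_tour_then_next_branch[OF tours(2)] at2 funpow_face_step_add[of "Suc K1" "Suc K2" d]
    by (simp add: y''_def)
  have at1: "(face_step ^^ 0) d = (x, y)" by (simp add: d_def)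
  note seg1 = leaf_steps_of_branch_tour[OF at1 tours(1) x, unfolded add_0 atLeast0AtMost]
  note seg2 = leaf_steps_of_branch_tour[OF at2 tours(2) x]
  note seg3 = leaf_steps_of_branch_tour[OF at3 tours(3) x]
  have "0 < card (tcomp V T x y'' \<inter> leaves V T)"
    using branch_has_leaf[OF xy'' x] finite_tcomp by (simp add: card_gt_0_iff)
  with seg3(2) have c3: "{Suc (Suc K1 + K2)..Suc (Suc K1 + K2) + K3} \<inter> leaf_steps d \<noteq> {}"
    by (metis card.empty not_le)
  have c1: "2 \<le> card ({..K1} \<inter> leaf_steps d)" using seg1(2) leafy(1) by simp
  have c2: "2 \<le> card ({Suc K1..Suc K1 + K2} \<inter> leaf_steps d)"
    using seg2(2) leafy(2) by (simp add: y'_def)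
  obtain j1 j2 m1 m2 t where
      order: "j1 < j2" "j2 < m1" "m1 < m2" "m2 < t"
      and steps: "j1 \<in> leaf_steps d" "j2 \<in> leaf_steps d" "m1 \<in> leaf_steps d"
        "m2 \<in> leaf_steps d" "t \<in> leaf_steps d"
      and bounds: "j2 \<le> K1" "Suc K1 \<le> m1" "m2 \<le> Suc K1 + K2" "t \<le> Suc (Suc K1 + K2) + K3"
      and gaps: "{j1<..<j2} \<inter> leaf_steps d = {}" "{j2<..<m1} \<inter> leaf_steps d = {}"
        "{m1<..<m2} \<inter> leaf_steps d = {}" "{m2<..<t} \<inter> leaf_steps d = {}"
    by (rule obtain_consecutive_across_intervals[OF c1 c2 c3])
  have "dart d" using xy by (simp add: d_def dart_def)
  note consecutive = cyc_adj_consecutive_leaf_steps[OF this]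
  have "snd ((face_step ^^ t) d) \<in> tcomp V T x y' \<union> tcomp V T x y''"
    using seg2(1)[of t] seg3(1)[of t] steps(5) order bounds by (cases "t \<le> Suc K1 + K2") auto
  then have "snd ((face_step ^^ t) d) \<notin> tcomp V T x y" using disj by blast
  then show ?thesis
  proof (rule that[OF consecutive[OF steps(1,2) order(1) gaps(1)]
        consecutive[OF steps(2,3) order(2) gaps(2)] consecutive[OF steps(3,4) order(3) gaps(3)]
        consecutive[OF steps(4,5) order(4) gaps(4)], rotated 2])
    show "snd ((face_step ^^ j1) d) \<in> tcomp V T x y" "snd ((face_step ^^ j2) d) \<in> tcomp V T x y"
      using seg1(1) steps(1,2) order(1) bounds(1) by auto
    show "snd ((face_step ^^ m1) d) \<in> tcomp V T x (rot x y)"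
      "snd ((face_step ^^ m2) d) \<in> tcomp V T x (rot x y)"
      using seg2(1) steps(3,4) order(3) bounds(2,3) by (auto simp: y'_def)
  qed
qed

lemma card_branch_leaves_pos:
  "T x z \<Longrightarrow> x \<notin> leaves V T \<Longrightarrow> 0 < card (tcomp V T x z \<inter> leaves V T)"
  using branch_has_leaf finite_tcomp by (simp add: card_gt_0_iff)

lemma branch_after_leafy_branch_has_one_leaf:
  assumes pos: "\<forall>u v. H u v \<longrightarrow> kappa_lly V H u v > 0"
    and deg_x: "3 \<le> card (nbrs T x)" and xy: "T x y"
    and leafy: "2 \<le> card (tcomp V T x y \<inter> leaves V T)"
  shows "card (tcomp V T x (rot x y) \<inter> leaves V T) = 1"
proof -
  have "x \<notin> leaves V T" using deg_x by (simp add: leaves_def deg_def)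
  then have "0 < card (tcomp V T x (rot x y) \<inter> leaves V T)"
    using card_branch_leaves_pos rot_edge[OF xy] by blast
  moreover have "\<not> 2 \<le> card (tcomp V T x (rot x y) \<inter> leaves V T)"
  proof
    assume leafy': "2 \<le> card (tcomp V T x (rot x y) \<inter> leaves V T)"
    obtain u' u v v' w where chain:
        "cyc_adj V T rot u' u" "cyc_adj V T rot u v" "cyc_adj V T rot v v'" "cyc_adj V T rot v' w"
        "u' \<in> tcomp V T x y" "u \<in> tcomp V T x y" "w \<notin> tcomp V T x y"
        "v \<in> tcomp V T x (rot x y)" "v' \<in> tcomp V T x (rot x y)"
      by (rule leaf_chain_across_branches[OF deg_x xy leafy leafy'])
    have "y \<noteq> rot x y" using rot_neq[OF xy] deg_x by simp
    then interpret tree_like_edge V H u v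
      using tree_like_edge_between_branches[OF xy rot_edge[OF xy] _ leafy leafy' chain] by blast
    show False using kappa_lly_nonpos pos adj_uv by fastforce
  qed
  ultimately show ?thesis by linarith
qed

end

theorem lemma3p1:
  fixes V :: "'a set" and T :: "'a \<Rightarrow> 'a \<Rightarrow> bool" and rot :: "'a \<Rightarrow> 'a \<Rightarrow> 'a"
    and x y :: 'a
  assumes halin: "gen_halin V T rot"
    and pos: "\<forall>u v. halin_adj V T rot u v \<longrightarrow> kappa_lly V (halin_adj V T rot) u v > 0"
    and xV: "x \<in> V" and xmax: "deg T x = max_deg V T"
    and xy: "T x y"
    and big: "2 \<le> card (tcomp V T x y \<inter> leaves V T)"
  shows "card (tcomp V T x (rot x y) \<inter> leaves V T) = 1 \<and>
         (\<forall>w. T x w \<and> rot x w = y \<longrightarrow> card (tcomp V T x w \<inter> leaves V T) = 1)"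
proof -
  interpret embedded_tree V T rot
    using halin by unfold_locales (simp_all add: gen_halin_def)
  have deg_x: "3 \<le> card (nbrs T x)" using xmax max_deg_ge_3 by (simp add: deg_def)
  have "card (tcomp V T x w \<inter> leaves V T) = 1" if w: "T x w" "rot x w = y" for w
  proof -
    \<comment> \<open>were the branch before y leafy, the branch at y would have a single leaf\<close>
    have "\<not> 2 \<le> card (tcomp V T x w \<inter> leaves V T)"
      using branch_after_leafy_branch_has_one_leaf[OF pos deg_x w(1)] w(2) big by auto
    moreover have "0 < card (tcomp V T x w \<inter> leaves V T)"
      using card_branch_leaves_pos[OF w(1)] deg_x by (simp add: leaves_def deg_def)
    ultimately show ?thesis by linarith
  qed
  with branch_after_leafy_branch_has_one_leaf[OF pos deg_x xy big] show ?thesis by blast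
qed

end
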